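(* Fix $b\in\mathbb{Z}^{V_+}_{\ge 0}$. For every $\bar x\in\mathcal{X}$ define $$\mathrm{SRI}(\bar x)=\Big\{y\in[\mathbf 0,b]^N:\ y^\xi(S)\ge k_\xi(S)+\bar x(E(S))-|S|\ \ \forall\,\emptyset\ne S\subseteq V_+,\ \forall \xi\in[N]\Big\}.$$ Then $\mathrm{SRI}(\bar x)=\operatorname{conv}\big(\Pi(\bar x)\cap[\mathbf 0,b]^N\big)$ for every $\bar x\in\mathcal{X}\cap\mathbb{Z}^E$.
   Context: $G=(V,E)$ is a complete undirected graph with $V=\{0\}\cup V_+$ ($0$ is the depot, $V_+$ the customers); $D=(V,A)$ replaces each edge by two opposite arcs. $C\in\mathbb{Q}_{>0}$ is the capacity. Scenarios $\xi\in[N]$ have demand vectors $d^\xi\in\mathbb{Q}^{V_+}_{\ge0}$ and probabilities $p_\xi\ge0$, $\sum_\xi p_\xi=1$; assume $d^\xi(v)\le C$ for all $\xi,v$. $f(S)=\sum_{i\in S}f(i)$; $k_\xi(S)=\lceil d^\xi(S)/C\rceil$; $\bar d=\sum_\xi p_\xi d^\xi$. For $S\subseteq V$, $\delta(S)$ is the set of edges with exactly one endpoint in $S$ and $E(S)$ the set of edges with both endpoints in $S$. $\mathcal{X}$ is one of the polytopes $\mathcal{X}_{\mathrm{sub}}=\{x\in[0,2]^E: x(\delta(v))=2\ \forall v\in V_+,\ x(E(S))\le|S|-1\ \forall\emptyset\ne S\subseteq V_+\}$ or $\mathcal{X}_{\mathrm{cvrp}}=\mathcal{X}_{\mathrm{sub}}\cap\{x: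 x(\delta(0))=2k,\ x(E(S))\le |S|-\lceil \bar d(S)/C\rceil\ \forall \emptyset\ne S\subseteq V_+\}$ for a given positive integer $k$. A route $R=(v_1,\dots,v_\ell)$ is the cycle $0,v_1,\dots,v_\ell,0$ through distinct customers, $V_+(R)=\{v_1,\dots,v_\ell\}$, $v_0=v_{\ell+1}=0$. Each $x\in\mathcal{X}\cap\mathbb{Z}^E$ is a routing plan; $\mathcal{R}(x)$ is the collection of routes it encodes (a value $2$ on edge $\{0,v\}$ encodes the route $(v)$), whose customer sets partition $V_+$. Vectors $y\in\mathbb{R}^{[N]\times V_+}$ have entries $y^\xi_v$, $y^\xi$ is the scenario-$\xi$ restriction. For a route $R=(v_1,\dots,v_\ell)$ and $\xi$, $\mathcal{Y}^\xi(R)$ is the set of $y^\xi\in\mathbb{Z}^{V_+}_{\ge0}$ for which there exist $f\in\mathbb{R}^A_{\ge0}$, $g\in\mathbb{R}^{V_+}_{\ge0}$ with $f_{(v_{i-1},v_i)}+d^\xi(v_i)=f_{(v_i,v_{i+1})}+g_{v_i}$ ($i\in[\ell]$), $f_{(v_{i-1},v_i)}\le C$ ($i\in[\ell+1]$), $g_{v_i}\le C y^\xi_{v_i}$ ($i\in[\ell]$). $\Pi(R)=\mathcal{Y}^1(R)\times\cdots\times\mathcal{Y}^N(R)$, and $\Pi(x)=\bigcap_{R\in\mathcal{R}(x)}\Pi(R)$ for $x\in\mathcal{X}\cap\mathbb{Z}^E$. $[\mathbf 0,b]^N=\{y\in\mathbb{R}^{[N]\times V_+}:0\le y^\xi_v\le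 b_v\ \forall\xi,v\}$. *)

theory Defs
  imports "HOL-Analysis.Analysis"
begin

text \<open>Customers V+ are the elements of a finite type 'v; the vertex set
V = {0} \<union> V+ is the type 'v option, with None the depot 0 and Some v the customer v.
Scenarios [N] are the elements of a finite type 's.  Edges of the complete graph G
are the two-element sets of vertices; arcs of D are ordered pairs of distinct vertices.
An edge vector x in R^E is a function x :: 'v option set \<Rightarrow> real, of which only the
values on edges are ever used.  Vectors y in R^([N] x V+) are elements of
real^'v^'s, with y $ xi $ v = y^xi_v.\<close>

definition edges :: "'v option set set" where
  "edges = {e. \<exists>u w. u \<noteq> w \<and> e = {u, w}}"

definition delta_cust :: "'v \<Rightarrow> 'v option set set" where
  "delta_cust v = {e \<in> edges. Some v \<in> e}"

definition delta_depot :: "'v option set set" where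
  "delta_depot = {e \<in> edges. None \<in> e}"

definition inner_edges :: "'v set \<Rightarrow> 'v option set set" where
  "inner_edges S = {e \<in> edges. e \<subseteq> Some ` S}"

definition X_sub :: "('v::finite option set \<Rightarrow> real) set" where
  "X_sub = {x. (\<forall>e\<in>edges. 0 \<le> x e \<and> x e \<le> 2)
             \<and> (\<forall>v. sum x (delta_cust v) = 2)
             \<and> (\<forall>S. S \<noteq> {} \<longrightarrow> sum x (inner_edges S) \<le> real (card S) - 1)}"

definition dbar :: "('s::finite \<Rightarrow> real) \<Rightarrow> ('s \<Rightarrow> 'v \<Rightarrow> real) \<Rightarrow> 'v \<Rightarrow> real" where
  "dbar p d v = (\<Sum>xi\<in>UNIV. p xi * d xi v)"

definition X_cvrp :: "real \<Rightarrow> ('s::finite \<Rightarrow> real) \<Rightarrow> ('s \<Rightarrow> 'v::finite \<Rightarrow> real) \<Rightarrow> nat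
    \<Rightarrow> ('v option set \<Rightarrow> real) set" where
  "X_cvrp C p d k = X_sub \<inter> {x. sum x delta_depot = 2 * real k
      \<and> (\<forall>S. S \<noteq> {} \<longrightarrow>
           sum x (inner_edges S) \<le> real (card S) - real_of_int \<lceil>sum (dbar p d) S / C\<rceil>)}"

definition kxi :: "real \<Rightarrow> ('s \<Rightarrow> 'v \<Rightarrow> real) \<Rightarrow> 's \<Rightarrow> 'v set \<Rightarrow> int" where
  "kxi C d xi S = \<lceil>sum (d xi) S / C\<rceil>"

text \<open>Routes: a route R = (v_1,...,v_l) is a nonempty list of distinct customers;
route_vtx R i is v_i, with v_0 = v_(l+1) = depot.\<close>
definition is_route :: "'v list \<Rightarrow> bool" where
  "is_route R \<longleftrightarrow> R \<noteq> [] \<and> distinct R"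

definition route_vtx :: "'v list \<Rightarrow> nat \<Rightarrow> 'v option" where
  "route_vtx R i = (if i = 0 \<or> i = length R + 1 then None else Some (R ! (i - 1)))"

text \<open>Edge incidence vector of the cycle 0, v_1, ..., v_l, 0 (value 2 on {0,v} for R = (v)).\<close>
definition route_vec :: "'v list \<Rightarrow> 'v option set \<Rightarrow> real" where
  "route_vec R e = real (card {i \<in> {1..length R + 1}. {route_vtx R (i - 1), route_vtx R i} = e})"

text \<open>R(x): the routes encoded by an integral routing plan x, i.e. the routes R whose
cycle coincides with x on all edges incident to the customers of R (both orientations
of each cycle are included).\<close>
definition routes_of :: "('v option set \<Rightarrow> real) \<Rightarrow> 'v list set" where
  "routes_of x = {R. is_route R \<and>
      (\<forall>e\<in>edges. e \<inter> Some ` set R \<noteq> {} \<longrightarrow> x e = route_vec R e)}"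

definition Yxi :: "real \<Rightarrow> ('s \<Rightarrow> 'v \<Rightarrow> real) \<Rightarrow> 's \<Rightarrow> 'v list \<Rightarrow> (real^'v) set" where
  "Yxi C d xi R = {z. (\<forall>v. z $ v \<in> \<int> \<and> 0 \<le> z $ v) \<and>
     (\<exists>(f :: 'v option \<times> 'v option \<Rightarrow> real) (g :: 'v \<Rightarrow> real).
        (\<forall>a. 0 \<le> f a) \<and> (\<forall>v. 0 \<le> g v) \<and>
        (\<forall>i\<in>{1..length R}.
           f (route_vtx R (i - 1), route_vtx R i) + d xi (R ! (i - 1))
             = f (route_vtx R i, route_vtx R (i + 1)) + g (R ! (i - 1))) \<and>
        (\<forall>i\<in>{1..length R + 1}. f (route_vtx R (i - 1), route_vtx R i) \<le> C) \<and>
        (\<forall>i\<in>{1..length R}. g (R ! (i - 1)) \<le> C * z $ (R ! (i - 1))))}"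

definition Pi_route :: "real \<Rightarrow> ('s \<Rightarrow> 'v \<Rightarrow> real) \<Rightarrow> 'v list \<Rightarrow> (real^'v^'s) set" where
  "Pi_route C d R = {y. \<forall>xi. y $ xi \<in> Yxi C d xi R}"

definition Pi_plan :: "real \<Rightarrow> ('s \<Rightarrow> 'v \<Rightarrow> real) \<Rightarrow> ('v option set \<Rightarrow> real) \<Rightarrow> (real^'v^'s) set" where
  "Pi_plan C d x = (\<Inter>R\<in>routes_of x. Pi_route C d R)"

definition box0 :: "('v \<Rightarrow> int) \<Rightarrow> (real^'v^'s) set" where
  "box0 b = {y. \<forall>xi v. 0 \<le> y $ xi $ v \<and> y $ xi $ v \<le> real_of_int (b v)}"

definition SRI :: "real \<Rightarrow> ('s \<Rightarrow> 'v \<Rightarrow> real) \<Rightarrow> ('v \<Rightarrow> int) \<Rightarrow> ('v option set \<Rightarrow> real)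
    \<Rightarrow> (real^'v^'s) set" where
  "SRI C d b x = {y \<in> box0 b. \<forall>S xi. S \<noteq> {} \<longrightarrow>
      sum (\<lambda>v. y $ xi $ v) S \<ge> real_of_int (kxi C d xi S) + sum x (inner_edges S) - real (card S)}"

end

theory Submission
  imports Defs
begin

text \<open>An integral routing plan splits into routes, and a route is determined, up to
  orientation, by any one of its customers.

  Validity: summing the flow balance of a feasible load over the customers of \<open>S\<close> on a
  route \<open>R\<close> gives \<open>d\<^sup>\<xi>(S \<inter> R) \<le> C y\<^sup>\<xi>(S \<inter> R) + C/2 \<cdot> (crossings of \<delta>(S) by R)\<close>. Summed over
  the routes and combined with \<open>x(\<delta>(S)) + 2 x(E(S)) \<le> 2|S|\<close> this yields
  \<open>d\<^sup>\<xi>(S)/C \<le> y\<^sup>\<xi>(S) + |S| - x(E(S))\<close>, and the right-hand side is integral for integral \<open>y\<close>.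

  Completeness: on a segment of a route \<open>x(E(segment)) = |segment| - 1\<close>, so \<open>SRI(x)\<close> lies in
  the polytope \<open>T\<close> defined by the segment inequalities alone. Along a route these form an
  interval matrix, so the vertices of \<open>T\<close> are integral, and an integral point of \<open>T\<close> is
  feasible by greedy unloading. By Krein--Milman, \<open>T\<close> is the convex hull of such points.\<close>

section \<open>Lists, prefix sums and perturbations\<close>

definition list_segment :: "'a list \<Rightarrow> nat \<Rightarrow> nat \<Rightarrow> 'a set" where
  "list_segment xs a b = (\<lambda>k. xs ! k) ` {a..<b}"

lemma sum_list_segment:
  assumes "distinct xs" "b \<le> length xs"
  shows "sum h (list_segment xs a b) = (\<Sum>k = a..<b. h (xs ! k))"
proof -
  have "inj_on (\<lambda>k. xs ! k) {a..<b}" using inj_on_nth[OF assms(1), of "{a..<b}"] assms(2) by simp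
  then show ?thesis unfolding list_segment_def by (simp add: sum.reindex)
qed

lemma card_list_segment:
  assumes "distinct xs" "b \<le> length xs"
  shows "card (list_segment xs a b) = b - a"
proof -
  have "inj_on (\<lambda>k. xs ! k) {a..<b}" using inj_on_nth[OF assms(1), of "{a..<b}"] assms(2) by simp
  then show ?thesis unfolding list_segment_def by (simp add: card_image)
qed

lemma list_segment_subset_set: "b \<le> length xs \<Longrightarrow> list_segment xs a b \<subseteq> set xs"
  unfolding list_segment_def by auto

lemma list_segment_rev:
  assumes "a \<le> b" "b \<le> length xs"
  shows "list_segment (rev xs) a b = list_segment xs (length xs - b) (length xs - a)"
proof -
  have "list_segment (rev xs) a b = (\<lambda>k. xs ! (length xs - Suc k)) ` {a..<b}"
    unfolding list_segment_def using assms by (auto simp: rev_nth intro!: image_cong)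
  also have "(\<lambda>k. length xs - Suc k) ` {a..<b} = {length xs - b..<length xs - a}"
  proof (rule set_eqI, rule iffI)
    fix j assume "j \<in> {length xs - b..<length xs - a}"
    then show "j \<in> (\<lambda>k. length xs - Suc k) ` {a..<b}"
      using assms by (intro image_eqI[of _ _ "length xs - Suc j"]) auto
  qed (use assms in auto)
  then have "(\<lambda>k. xs ! (length xs - Suc k)) ` {a..<b} = (\<lambda>k. xs ! k) ` {length xs - b..<length xs - a}"
    by (metis image_image)
  finally show ?thesis unfolding list_segment_def .
qed

definition index_in :: "'a list \<Rightarrow> 'a \<Rightarrow> nat" where
  "index_in xs v = (THE k. k < length xs \<and> xs ! k = v)"

lemma index_in_nth: "distinct xs \<Longrightarrow> k < length xs \<Longrightarrow> index_in xs (xs ! k) = k"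
  unfolding index_in_def by (rule the_equality) (auto simp: nth_eq_iff_index_eq)

definition lindley :: "(nat \<Rightarrow> real) \<Rightarrow> nat \<Rightarrow> real" where
  "lindley t = rec_nat 0 (\<lambda>k l. max 0 (l + t k))"

lemma lindley_0 [simp]: "lindley t 0 = 0"
  and lindley_Suc [simp]: "lindley t (Suc k) = max 0 (lindley t k + t k)"
  unfolding lindley_def by simp_all

lemma lindley_nonneg: "0 \<le> lindley t k"
  by (cases k) simp_all

lemma lindley_eq_suffix_sum: "\<exists>a\<le>i. lindley t i = (\<Sum>k = a..<i. t k)"
proof (induction i)
  case (Suc i)
  then obtain a where a: "a \<le> i" "lindley t i = (\<Sum>k = a..<i. t k)" by blast
  show ?case
  proof (cases "lindley t i + t i \<le> 0")
    case True
    then show ?thesis by (intro exI[of _ "Suc i"]) simp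
  next
    case False
    then show ?thesis using a by (intro exI[of _ a]) simp
  qed
qed simp

lemma sum_card_fibers:
  assumes "finite A" "finite E"
  shows "(\<Sum>e\<in>E. card {i\<in>A. h i = e}) = card {i\<in>A. h i \<in> E}"
proof -
  have "{i\<in>A. h i \<in> E} = (\<Union>e\<in>E. {i\<in>A. h i = e})" by auto
  moreover have "card (\<Union>e\<in>E. {i\<in>A. h i = e}) = (\<Sum>e\<in>E. card {i\<in>A. h i = e})"
    by (rule card_UN_disjoint) (use assms in auto)
  ultimately show ?thesis by simp
qed

text \<open>Summing \<open>F i - F (i - 1)\<close> over \<open>I\<close> telescopes along each maximal run of \<open>I\<close>; what is
  left is one term per run end, and the run ends are half of the boundary of \<open>I\<close>.\<close>

lemma sum_minus_shifted_sum_le: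
  fixes F :: "nat \<Rightarrow> real" and I :: "nat set"
  assumes I: "finite I" "0 \<notin> I" and F: "\<And>k. 0 \<le> F k" "\<And>i. i \<in> I \<Longrightarrow> F i \<le> C"
  shows "2 * ((\<Sum>i\<in>I. F i) - (\<Sum>i\<in>I. F (i - 1))) \<le> C * card {k. (k \<in> I) \<noteq> (Suc k \<in> I)}"
proof -
  define J where "J = {k. Suc k \<in> I}"
  have inj: "inj_on (\<lambda>i. i - 1) I"
    using I(2) by (intro inj_onI) (metis Suc_pred' neq0_conv)
  have J_image: "J = (\<lambda>i. i - 1) ` I"
  proof (rule set_eqI, rule iffI)
    fix k assume "k \<in> J"
    then show "k \<in> (\<lambda>i. i - 1) ` I" unfolding J_def by (intro image_eqI[of _ _ "Suc k"]) auto
  next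
    fix k assume "k \<in> (\<lambda>i. i - 1) ` I"
    then obtain i where i: "i \<in> I" "k = i - 1" by blast
    have "i \<noteq> 0"
    proof
      assume "i = 0"
      then show False using I(2) i(1) by simp
    qed
    with i show "k \<in> J" unfolding J_def by simp
  qed
  have finJ: "finite J" using I(1) J_image by simp
  have shifted: "(\<Sum>i\<in>I. F (i - 1)) = sum F J"
    unfolding J_image by (rule sum.reindex[OF inj, unfolded comp_def, symmetric])
  have "card (I - J) = card (J - I)"
    using card_image[OF inj] I(1) finJ J_image by (simp add: card_Diff_subset_Int Int_commute)
  moreover have "{k. (k \<in> I) \<noteq> (Suc k \<in> I)} = (I - J) \<union> (J - I)" unfolding J_def by auto
  ultimately have boundary: "card {k. (k \<in> I) \<noteq> (Suc k \<in> I)} = 2 * card (I - J)"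
    using I(1) finJ card_Un_disjoint[of "I - J" "J - I"] by (simp add: Diff_Int_distrib2)
  have "sum F I - sum F J = sum F (I - J) - sum F (J - I)"
    using I(1) finJ sum.Int_Diff[of I F J] sum.Int_Diff[of J F I] by (simp add: Int_commute)
  also have "\<dots> \<le> C * card (I - J)"
  proof -
    have "sum F (I - J) \<le> card (I - J) * C" by (rule sum_bounded_above) (use F(2) in blast)
    moreover have "0 \<le> sum F (J - I)" by (rule sum_nonneg) (rule F(1))
    ultimately show ?thesis by (simp add: mult.commute)
  qed
  finally show ?thesis unfolding shifted boundary by simp
qed

lemma finite_pos_lower_bound: "finite A \<Longrightarrow> \<exists>\<epsilon>>0. \<forall>s\<in>A. 0 < s \<longrightarrow> \<epsilon> \<le> (s::real)"
  by (intro exI[of _ "Min (insert 1 {s\<in>A. 0 < s})"]) (auto simp: Min_gr_iff)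

lemma not_extreme_point_if_two_sided:
  assumes "y - z \<in> S" "y + z \<in> S" "z \<noteq> 0"
  shows "\<not> y extreme_point_of S"
proof -
  have "y - z \<noteq> y + z"
  proof
    assume "y - z = y + z"
    then have "2 *\<^sub>R z = 0" by (simp add: scaleR_2 algebra_simps)
    then show False using assms(3) by simp
  qed
  moreover have "midpoint (y - z) (y + z) = y"
    unfolding midpoint_def by (simp add: scaleR_2[symmetric] algebra_simps)
  ultimately have "y \<in> open_segment (y - z) (y + z)" by (metis midpoint_in_open_segment)
  then show ?thesis using assms(1,2) unfolding extreme_point_of_def by blast
qed

definition frac_indicator :: "real \<Rightarrow> real \<Rightarrow> real" where
  "frac_indicator \<phi> s = (if frac s = \<phi> then 1 else 0)"

lemma frac_indicator_eq_if_diff_Ints: "s - s' \<in> \<int> \<Longrightarrow> frac_indicator \<phi> s = frac_indicator \<phi> s'"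
  unfolding frac_indicator_def using frac_diff_zero[of s s'] by simp

lemma abs_frac_indicator_diff_le: "\<bar>frac_indicator \<phi> s - frac_indicator \<phi> s'\<bar> \<le> 1"
  unfolding frac_indicator_def by simp

lemma frac_indicator_separates:
  assumes "s - s' \<notin> \<int>"
  shows "frac_indicator (frac s) s \<noteq> frac_indicator (frac s) s'"
proof -
  have "frac s' \<noteq> frac s"
  proof
    assume "frac s' = frac s"
    then have "frac (s - s') = 0" by (simp add: frac_diff_eq)
    then show False using assms by simp
  qed
  then show ?thesis unfolding frac_indicator_def by simp
qed

section \<open>Edges and routes\<close>

lemma finite_edges: "finite (edges :: 'v::finite option set set)"
  by (rule finite_subset[of _ UNIV]) auto

lemma doubleton_in_edges [simp]: "{a, b} \<in> edges \<longleftrightarrow> a \<noteq> b"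
  unfolding edges_def by (auto simp: doubleton_eq_iff)

lemma edgesE:
  assumes "e \<in> edges"
  obtains u w where "u \<noteq> w" "e = {u, w}"
  using assms unfolding edges_def by auto

lemma delta_cust_subset_edges: "delta_cust v \<subseteq> edges"
  unfolding delta_cust_def by auto

lemma doubleton_in_delta_cust [simp]: "{Some v, w} \<in> delta_cust v \<longleftrightarrow> w \<noteq> Some v"
  by (auto simp: delta_cust_def)

lemma delta_custE:
  assumes "e \<in> delta_cust v"
  obtains w where "w \<noteq> Some v" "e = {Some v, w}"
proof -
  have e: "e \<in> edges" "Some v \<in> e" using assms unfolding delta_cust_def by auto
  from e(1) obtain a c where ac: "a \<noteq> c" "e = {a, c}" by (rule edgesE)
  show ?thesis
  proof (cases "a = Some v")
    case True
    then show ?thesis using that[of c] ac by simp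
  next
    case False
    then show ?thesis using that[of a] ac e(2) by (simp add: insert_commute)
  qed
qed

lemma finite_delta_cust: "finite (delta_cust (v::'v::finite))"
  using finite_subset[OF delta_cust_subset_edges finite_edges] .

lemma finite_inner_edges: "finite (inner_edges (S :: 'v::finite set))"
  unfolding inner_edges_def by (rule finite_subset[OF _ finite_edges]) auto

lemma doubleton_eq_doubleton_iff: "w \<noteq> s \<Longrightarrow> a \<noteq> s \<Longrightarrow> {s, w} = {s, a} \<longleftrightarrow> w = a"
  by (auto simp: doubleton_eq_iff)

definition cut_edges :: "'v set \<Rightarrow> 'v option set set" where
  "cut_edges S = {e \<in> edges. card (e \<inter> Some ` S) = 1}"

lemma finite_cut_edges: "finite (cut_edges (S :: 'v::finite set))"
  unfolding cut_edges_def by (rule finite_subset[OF _ finite_edges]) auto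

lemma doubleton_in_cut_edges:
  "a \<noteq> b \<Longrightarrow> {a, b} \<in> cut_edges S \<longleftrightarrow> (a \<in> Some ` S) \<noteq> (b \<in> Some ` S)"
  unfolding cut_edges_def by (cases "a \<in> Some ` S"; cases "b \<in> Some ` S") (auto simp: Int_insert_left)

lemma route_vtx_0 [simp]: "route_vtx R 0 = None"
  and route_vtx_end [simp]: "route_vtx R (Suc (length R)) = None"
  by (simp_all add: route_vtx_def)

lemma route_vtx_Suc: "k < length R \<Longrightarrow> route_vtx R (Suc k) = Some (R ! k)"
  by (simp add: route_vtx_def)

lemma route_vtx_cases:
  assumes "m \<le> Suc (length R)"
  shows "(m = 0 \<or> m = Suc (length R)) \<and> route_vtx R m = None
    \<or> 0 < m \<and> m \<le> length R \<and> route_vtx R m = Some (R ! (m - 1))"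
  using assms by (auto simp: route_vtx_def)

lemma route_vtx_eq_None_iff:
  "m \<le> Suc (length R) \<Longrightarrow> route_vtx R m = None \<longleftrightarrow> m = 0 \<or> m = Suc (length R)"
  using route_vtx_cases[of m R] by auto

lemma route_vtx_in_Some_set: "m \<le> Suc (length R) \<Longrightarrow> route_vtx R m \<in> Some ` S \<longleftrightarrow>
    0 < m \<and> m \<le> length R \<and> R ! (m - 1) \<in> S"
  using route_vtx_cases[of m R] by auto

lemma route_vtx_eq_iff:
  assumes "distinct R" "m \<le> Suc (length R)" "m' \<le> Suc (length R)"
  shows "route_vtx R m = route_vtx R m' \<longleftrightarrow>
    m = m' \<or> m \<in> {0, Suc (length R)} \<and> m' \<in> {0, Suc (length R)}"
proof -
  have "R ! (m - 1) = R ! (m' - 1) \<longleftrightarrow> m - 1 = m' - 1"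
    if "0 < m" "m \<le> length R" "0 < m'" "m' \<le> length R"
    using nth_eq_iff_index_eq[OF assms(1)] that by simp
  then show ?thesis using route_vtx_cases[OF assms(2)] route_vtx_cases[OF assms(3)] by auto
qed

lemma route_vtx_eq_Some_nth_iff:
  assumes "distinct R" "i < length R" "m \<le> Suc (length R)"
  shows "route_vtx R m = Some (R ! i) \<longleftrightarrow> m = Suc i"
  using route_vtx_eq_iff[OF assms(1,3), of "Suc i"] assms route_vtx_Suc[of i R] by auto

lemma route_vtx_Some_in_set: "route_vtx R m = Some w \<Longrightarrow> m \<le> Suc (length R) \<Longrightarrow> w \<in> set R"
  by (auto simp: route_vtx_def split: if_splits)

lemma route_vtx_rev:
  assumes "m \<le> Suc (length R)"
  shows "route_vtx (rev R) m = route_vtx R (Suc (length R) - m)"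
  using assms by (cases "m = 0 \<or> m = Suc (length R)")
    (auto simp: route_vtx_def rev_nth Suc_diff_Suc)

lemma route_vec_incident:
  assumes R: "is_route R" and i: "i < length R" and w: "w \<noteq> Some (R ! i)"
  shows "route_vec R {Some (R ! i), w} =
    (if w = route_vtx R i then 1 else 0) + (if w = route_vtx R (Suc (Suc i)) then 1 else 0)"
proof -
  have dR: "distinct R" using R unfolding is_route_def by simp
  have steps: "{j \<in> {1..length R + 1}. {route_vtx R (j - 1), route_vtx R j} = {Some (R ! i), w}}
    = {j. j = Suc i \<and> w = route_vtx R i} \<union> {j. j = Suc (Suc i) \<and> w = route_vtx R (Suc (Suc i))}"
      (is "?A = ?B")
  proof (rule set_eqI, rule iffI)
    fix j assume "j \<in> ?A"
    then have j: "1 \<le> j" "j \<le> length R + 1"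
      and ends: "route_vtx R (j - 1) = Some (R ! i) \<and> route_vtx R j = w \<or>
           route_vtx R (j - 1) = w \<and> route_vtx R j = Some (R ! i)"
      by (auto simp: doubleton_eq_iff)
    from ends show "j \<in> ?B"
    proof
      assume "route_vtx R (j - 1) = Some (R ! i) \<and> route_vtx R j = w"
      moreover have "j = Suc (Suc i)"
        using calculation route_vtx_eq_Some_nth_iff[OF dR i, of "j - 1"] j by simp
      ultimately show ?thesis by simp
    next
      assume "route_vtx R (j - 1) = w \<and> route_vtx R j = Some (R ! i)"
      moreover have "j = Suc i" using calculation route_vtx_eq_Some_nth_iff[OF dR i, of j] j by simp
      ultimately show ?thesis by simp
    qed
  next
    fix j assume "j \<in> ?B"
    then show "j \<in> ?A" using i route_vtx_Suc[of i R] by (auto simp: insert_commute)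
  qed
  show ?thesis
    unfolding route_vec_def steps by (cases "w = route_vtx R i"; cases "w = route_vtx R (Suc (Suc i))") auto
qed

lemma route_vec_nonzero_vertex:
  assumes "route_vec R e \<noteq> 0" "a \<in> e"
  shows "a = None \<or> (\<exists>w\<in>set R. a = Some w)"
proof -
  have "{j \<in> {1..length R + 1}. {route_vtx R (j - 1), route_vtx R j} = e} \<noteq> {}"
    using assms(1) unfolding route_vec_def by (metis card.empty of_nat_0)
  then obtain j where j: "j \<in> {1..length R + 1}" "{route_vtx R (j - 1), route_vtx R j} = e"
    by blast
  then have "a = route_vtx R (j - 1) \<or> a = route_vtx R j" using assms(2) by auto
  then show ?thesis using j(1) route_vtx_Some_in_set[of R] by (cases a) auto
qed

text \<open>Positions are counted from 1, as in \<^const>\<open>route_vtx\<close>.\<close>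

definition route_positions :: "'v list \<Rightarrow> 'v set \<Rightarrow> nat set" where
  "route_positions R S = {i \<in> {1..length R}. R ! (i - 1) \<in> S}"

lemma sum_route_positions:
  assumes "distinct R"
  shows "(\<Sum>i\<in>route_positions R S. h (R ! (i - 1))) = (\<Sum>w\<in>S \<inter> set R. h w)"
proof -
  have "inj_on (\<lambda>i. R ! (i - 1)) (route_positions R S)"
    using nth_eq_iff_index_eq[OF assms]
    by (intro inj_onI) (fastforce simp: route_positions_def)
  moreover have "(\<lambda>i. R ! (i - 1)) ` route_positions R S = S \<inter> set R"
  proof (rule set_eqI, rule iffI)
    fix w assume "w \<in> S \<inter> set R"
    then obtain k where "k < length R" "R ! k = w" "w \<in> S" by (auto simp: in_set_conv_nth)
    then show "w \<in> (\<lambda>i. R ! (i - 1)) ` route_positions R S"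
      by (intro image_eqI[of _ _ "Suc k"]) (auto simp: route_positions_def)
  qed (auto simp: route_positions_def)
  ultimately show ?thesis by (metis (no_types, lifting) sum.reindex_cong)
qed

lemma card_boundary_route_positions:
  fixes R :: "'v::finite list"
  assumes R: "is_route R"
  shows "real (card {k. (k \<in> route_positions R S) \<noteq> (Suc k \<in> route_positions R S)})
    = (\<Sum>e\<in>cut_edges S. route_vec R e)"
proof -
  let ?I = "route_positions R S" and ?h = "\<lambda>i. {route_vtx R (i - 1), route_vtx R i}"
  have dR: "distinct R" and ne: "R \<noteq> []" using R unfolding is_route_def by auto
  have in_I: "m \<in> ?I \<longleftrightarrow> route_vtx R m \<in> Some ` S" if "m \<le> Suc (length R)" for m
    using route_vtx_in_Some_set[OF that, of S] that unfolding route_positions_def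
    by (simp add: Suc_le_eq)
  have step_in_cut: "?h (Suc k) \<in> cut_edges S \<longleftrightarrow> (k \<in> ?I) \<noteq> (Suc k \<in> ?I)"
    if "k \<le> length R" for k
  proof -
    have "route_vtx R k \<noteq> route_vtx R (Suc k)"
      using route_vtx_eq_iff[OF dR, of k "Suc k"] that ne by auto
    then show ?thesis using doubleton_in_cut_edges in_I[of k] in_I[of "Suc k"] that by simp
  qed
  have "{i \<in> {1..length R + 1}. ?h i \<in> cut_edges S}
      = Suc ` {k. (k \<in> ?I) \<noteq> (Suc k \<in> ?I)}"
  proof (rule set_eqI, rule iffI)
    fix i assume i: "i \<in> {i \<in> {1..length R + 1}. ?h i \<in> cut_edges S}"
    then obtain k where "i = Suc k" "k \<le> length R" by (cases i) auto
    then show "i \<in> Suc ` {k. (k \<in> ?I) \<noteq> (Suc k \<in> ?I)}" using i step_in_cut[of k] by auto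
  next
    fix i assume "i \<in> Suc ` {k. (k \<in> ?I) \<noteq> (Suc k \<in> ?I)}"
    then obtain k where k: "i = Suc k" "(k \<in> ?I) \<noteq> (Suc k \<in> ?I)" by auto
    then have "k \<le> length R" unfolding route_positions_def by auto
    then show "i \<in> {i \<in> {1..length R + 1}. ?h i \<in> cut_edges S}" using k step_in_cut[of k] by auto
  qed
  then have "card {i \<in> {1..length R + 1}. ?h i \<in> cut_edges S}
      = card {k. (k \<in> ?I) \<noteq> (Suc k \<in> ?I)}"
    by (simp add: card_image)
  moreover have "(\<Sum>e\<in>cut_edges S. card {i \<in> {1..length R + 1}. ?h i = e})
      = card {i \<in> {1..length R + 1}. ?h i \<in> cut_edges S}"
    by (rule sum_card_fibers) (simp_all add: finite_cut_edges)
  moreover have "(\<Sum>e\<in>cut_edges S. route_vec R e)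
      = real (\<Sum>e\<in>cut_edges S. card {i \<in> {1..length R + 1}. ?h i = e})"
    unfolding route_vec_def by simp
  ultimately show ?thesis by simp
qed

section \<open>The routes of an integral routing plan\<close>

lemma routes_of_is_route: "R \<in> routes_of x \<Longrightarrow> is_route R"
  unfolding routes_of_def by simp

lemma x_eq_route_vec:
  "R \<in> routes_of x \<Longrightarrow> e \<in> edges \<Longrightarrow> e \<inter> Some ` set R \<noteq> {} \<Longrightarrow> x e = route_vec R e"
  unfolding routes_of_def by simp

lemma x_route_incident:
  assumes R: "R \<in> routes_of x" and i: "i < length R" and w: "w \<noteq> Some (R ! i)"
  shows "x {Some (R ! i), w} =
    (if w = route_vtx R i then 1 else 0) + (if w = route_vtx R (Suc (Suc i)) then 1 else 0)"
proof -
  have "{Some (R ! i), w} \<inter> Some ` set R \<noteq> {}" using i by auto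
  then show ?thesis
    using x_eq_route_vec[OF R] w route_vec_incident[OF routes_of_is_route[OF R] i w] by simp
qed

lemma route_neighbour_if_x_nonzero:
  assumes "R \<in> routes_of x" "i < length R" "w \<noteq> Some (R ! i)" "x {Some (R ! i), w} \<noteq> 0"
  shows "w = route_vtx R i \<or> w = route_vtx R (Suc (Suc i))"
  using x_route_incident[OF assms(1-3)] assms(4) by (auto split: if_splits)

definition path_edges :: "'v list \<Rightarrow> nat \<Rightarrow> nat \<Rightarrow> 'v option set set" where
  "path_edges L a b = (\<lambda>k. {Some (L ! k), Some (L ! Suc k)}) ` {a..<b}"

lemma card_path_edges:
  assumes L: "distinct L" "b < length L"
  shows "card (path_edges L a b) = b - a"
proof -
  have "inj_on (\<lambda>k. {Some (L ! k), Some (L ! Suc k)}) {a..<b}"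
  proof (rule inj_onI)
    fix p q assume "p \<in> {a..<b}" "q \<in> {a..<b}"
      and eq: "{Some (L ! p), Some (L ! Suc p)} = {Some (L ! q), Some (L ! Suc q)}"
    then have "Suc p < length L" "Suc q < length L" using L(2) by auto
    with eq show "p = q" by (auto simp: doubleton_eq_iff nth_eq_iff_index_eq[OF L(1)])
  qed
  then show ?thesis unfolding path_edges_def by (simp add: card_image)
qed

lemma path_edges_subset_inner_edges:
  assumes L: "distinct L" "b < length L"
  shows "path_edges L a b \<subseteq> inner_edges (list_segment L a (Suc b))"
proof
  fix e assume "e \<in> path_edges L a b"
  then obtain k where k: "a \<le> k" "k < b" "e = {Some (L ! k), Some (L ! Suc k)}"
    unfolding path_edges_def by auto
  then have "L ! k \<noteq> L ! Suc k" using L by (simp add: nth_eq_iff_index_eq)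
  moreover have "L ! k \<in> list_segment L a (Suc b)" "L ! Suc k \<in> list_segment L a (Suc b)"
    using k unfolding list_segment_def by auto
  ultimately show "e \<in> inner_edges (list_segment L a (Suc b))"
    using k unfolding inner_edges_def by auto
qed

definition support_path :: "('v option set \<Rightarrow> real) \<Rightarrow> 'v list \<Rightarrow> bool" where
  "support_path x L \<longleftrightarrow> L \<noteq> [] \<and> distinct L \<and>
     (\<forall>k. Suc k < length L \<longrightarrow> 1 \<le> x {Some (L ! k), Some (L ! Suc k)})"

lemma support_path_length_le: "support_path x (L :: 'v::finite list) \<Longrightarrow> length L \<le> CARD('v)"
  unfolding support_path_def using distinct_card[of L] card_mono[of UNIV "set L"] by auto

lemma support_path_rev:
  assumes "support_path x L"
  shows "support_path x (rev L)"
proof -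
  have "1 \<le> x {Some (rev L ! k), Some (rev L ! Suc k)}" if k: "Suc k < length L" for k
  proof -
    let ?j = "length L - 2 - k"
    have "rev L ! k = L ! Suc ?j" "rev L ! Suc k = L ! ?j"
      using k by (simp_all add: rev_nth Suc_diff_Suc)
    then have "{Some (rev L ! k), Some (rev L ! Suc k)} = {Some (L ! ?j), Some (L ! Suc ?j)}"
      by (simp add: insert_commute)
    moreover have "Suc ?j < length L" using k by simp
    ultimately show ?thesis using assms unfolding support_path_def by simp
  qed
  then show ?thesis using assms unfolding support_path_def by simp
qed

lemma support_path_Cons:
  assumes "support_path x L" "w \<notin> set L" "1 \<le> x {Some w, Some (L ! 0)}"
  shows "support_path x (w # L)"
proof -
  have "1 \<le> x {Some ((w # L) ! k), Some ((w # L) ! Suc k)}" if "Suc k < length (w # L)" for k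
    using assms that unfolding support_path_def by (cases k) auto
  then show ?thesis using assms unfolding support_path_def by simp
qed

lemma support_path_route_neighbours:
  assumes L: "support_path x L"
    and head: "1 \<le> x {Some (L ! 0), None}" and tail: "1 \<le> x {Some (L ! (length L - 1)), None}"
    and i: "i < length L"
  shows "route_vtx L i \<noteq> Some (L ! i)" "1 \<le> x {Some (L ! i), route_vtx L i}"
    "route_vtx L (Suc (Suc i)) \<noteq> Some (L ! i)" "1 \<le> x {Some (L ! i), route_vtx L (Suc (Suc i))}"
proof -
  have dL: "distinct L" using L unfolding support_path_def by simp
  show "route_vtx L i \<noteq> Some (L ! i)" "route_vtx L (Suc (Suc i)) \<noteq> Some (L ! i)"
    using route_vtx_eq_Some_nth_iff[OF dL i, of i] route_vtx_eq_Some_nth_iff[OF dL i, of "Suc (Suc i)"] i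
    by simp_all
  show "1 \<le> x {Some (L ! i), route_vtx L i}"
  proof (cases i)
    case (Suc k)
    then show ?thesis
      using L i route_vtx_Suc[of k L] unfolding support_path_def by (simp add: insert_commute)
  qed (use head in simp)
  show "1 \<le> x {Some (L ! i), route_vtx L (Suc (Suc i))}"
  proof (cases "Suc i = length L")
    case True
    then show ?thesis using tail by (metis diff_Suc_1 route_vtx_end)
  next
    case False
    then show ?thesis using L i route_vtx_Suc[of "Suc i" L] unfolding support_path_def by simp
  qed
qed

locale integral_plan =
  fixes x :: "'v::finite option set \<Rightarrow> real"
  assumes x_in_X_sub: "x \<in> X_sub" and x_integral: "\<forall>e\<in>edges. x e \<in> \<int>"
begin

lemma x_nonneg: "e \<in> edges \<Longrightarrow> 0 \<le> x e"
  and x_le_2: "e \<in> edges \<Longrightarrow> x e \<le> 2"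
  and degree_eq_2: "sum x (delta_cust v) = 2"
  and subtour_bound: "S \<noteq> {} \<Longrightarrow> sum x (inner_edges S) \<le> real (card S) - 1"
  using x_in_X_sub unfolding X_sub_def by auto

lemma x_cases:
  assumes "e \<in> edges"
  shows "x e = 0 \<or> x e = 1 \<or> x e = 2"
proof -
  obtain n where n: "x e = of_int n" using x_integral assms Ints_cases by metis
  then have "0 \<le> n" "n \<le> 2" using x_nonneg[OF assms] x_le_2[OF assms] by simp_all
  then have "n = 0 \<or> n = 1 \<or> n = 2" by auto
  then show ?thesis using n by auto
qed

lemma x_customer_edge_le_1:
  assumes "u \<noteq> w"
  shows "x {Some u, Some w} \<le> 1"
proof -
  have "inner_edges {u, w} = {{Some u, Some w}}"
    using assms unfolding inner_edges_def by (auto elim!: edgesE)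
  then show ?thesis using subtour_bound[of "{u, w}"] assms by simp
qed

lemma card_le_sum_inner_edges:
  assumes "F \<subseteq> inner_edges S" "\<And>e. e \<in> F \<Longrightarrow> 1 \<le> x e"
  shows "real (card F) \<le> sum x (inner_edges S)"
proof -
  have "real (card F) \<le> sum x F" using sum_mono[of F "\<lambda>_. 1" x] assms(2) by simp
  also have "\<dots> \<le> sum x (inner_edges S)"
    using assms(1) x_nonneg by (intro sum_mono2[OF finite_inner_edges]) (auto simp: inner_edges_def)
  finally show ?thesis .
qed

text \<open>Stated in the shape of \<open>route_vec_incident\<close>, so that the two can be compared edge by
  edge.\<close>

lemma x_incident_eq:
  assumes a: "a \<noteq> Some u" "1 \<le> x {Some u, a}" and b: "b \<noteq> Some u" "1 \<le> x {Some u, b}"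
    and ab: "a = b \<Longrightarrow> 2 \<le> x {Some u, a}" and w: "w \<noteq> Some u"
  shows "x {Some u, w} = (if w = a then 1 else 0) + (if w = b then 1 else 0)"
proof -
  let ?D = "delta_cust u" and ?E = "{{Some u, a}, {Some u, b}}"
  have E: "?E \<subseteq> ?D" using a b by simp
  have nonneg: "0 \<le> x e" if "e \<in> ?D - ?E" for e
    by (rule x_nonneg) (use that delta_cust_subset_edges in \<open>meson DiffD1 subsetD\<close>)
  have "sum x ?D = sum x ?E + sum x (?D - ?E)"
    using sum.subset_diff[OF E finite_delta_cust] by (simp add: add.commute)
  moreover have "2 \<le> sum x ?E"
    using a b ab doubleton_eq_doubleton_iff[OF a(1) b(1)] by (cases "a = b") auto
  moreover have "0 \<le> sum x (?D - ?E)" using nonneg by (rule sum_nonneg)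
  ultimately have on_E: "sum x ?E = 2" and off_E: "sum x (?D - ?E) = 0"
    using degree_eq_2[of u] by linarith+
  have "x e = 0" if "e \<in> ?D - ?E" for e
    using off_E nonneg that sum_nonneg_eq_0_iff[of "?D - ?E" x] finite_delta_cust by blast
  moreover have "x {Some u, a} = (if a = b then 2 else 1)" "x {Some u, b} = (if a = b then 2 else 1)"
    using on_E a b ab doubleton_eq_doubleton_iff[OF a(1) b(1)] by (cases "a = b"; auto)+
  ultimately show ?thesis
    using w doubleton_eq_doubleton_iff[OF w a(1)] doubleton_eq_doubleton_iff[OF w b(1)]
    by (cases "w = a \<or> w = b") auto
qed

lemma exists_other_incident_edge:
  assumes "e \<in> delta_cust u" "x e \<le> 1"
  obtains w where "w \<noteq> Some u" "{Some u, w} \<noteq> e" "1 \<le> x {Some u, w}"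
proof -
  have "\<exists>w. w \<noteq> Some u \<and> {Some u, w} \<noteq> e \<and> 1 \<le> x {Some u, w}"
  proof (rule ccontr)
    assume none: "\<not> ?thesis"
    have "x e' = 0" if e': "e' \<in> delta_cust u - {e}" for e'
    proof -
      from e' have "e' \<in> delta_cust u" by simp
      then obtain w where w: "w \<noteq> Some u" "e' = {Some u, w}" by (rule delta_custE)
      with e' none have "x e' < 1" by auto
      moreover have "e' \<in> edges" using e' delta_cust_subset_edges by (meson DiffD1 subsetD)
      ultimately show ?thesis using x_cases[of e'] by auto
    qed
    then have "sum x (delta_cust u) = x e"
      using sum.remove[OF finite_delta_cust assms(1), of x] by simp
    then show False using degree_eq_2[of u] assms(2) by simp
  qed
  then show thesis using that by blast
qed

text \<open>A support path together with a chord back to its first vertex would form a cycle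
  violating the subtour elimination constraint of its vertex set.\<close>

lemma support_path_no_chord:
  assumes L: "support_path x L" and j: "2 \<le> j" "j < length L"
  shows "x {Some (L ! 0), Some (L ! j)} < 1"
proof (rule ccontr)
  assume chord: "\<not> ?thesis"
  have dL: "distinct L" using L unfolding support_path_def by simp
  let ?S = "list_segment L 0 (Suc j)" and ?c = "{Some (L ! 0), Some (L ! j)}"
  have "?c \<notin> path_edges L 0 j"
  proof
    assume "?c \<in> path_edges L 0 j"
    then obtain k where k: "k < j" "?c = {Some (L ! k), Some (L ! Suc k)}"
      by (auto simp: path_edges_def)
    then have "L ! 0 = L ! k \<and> L ! j = L ! Suc k \<or> L ! 0 = L ! Suc k \<and> L ! j = L ! k"
      by (auto simp: doubleton_eq_iff)
    moreover have "Suc k < length L" "L \<noteq> []" using k(1) j(2) by auto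
    ultimately show False using k j by (auto simp: nth_eq_iff_index_eq[OF dL])
  qed
  then have "card (insert ?c (path_edges L 0 j)) = Suc j"
    using card_path_edges[OF dL j(2)] by (simp add: path_edges_def)
  moreover have "insert ?c (path_edges L 0 j) \<subseteq> inner_edges ?S"
  proof (rule insert_subsetI[OF _ path_edges_subset_inner_edges[OF dL j(2)]])
    have "L \<noteq> []" using j(2) by auto
    then have "L ! 0 \<noteq> L ! j" using j nth_eq_iff_index_eq[OF dL, of 0 j] by simp
    moreover have "L ! 0 \<in> ?S" "L ! j \<in> ?S" unfolding list_segment_def by auto
    ultimately show "?c \<in> inner_edges ?S" unfolding inner_edges_def by auto
  qed
  moreover have "1 \<le> x e" if "e \<in> insert ?c (path_edges L 0 j)" for e
    using that chord L j unfolding support_path_def path_edges_def by auto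
  ultimately have "real (Suc j) \<le> sum x (inner_edges ?S)"
    using card_le_sum_inner_edges by metis
  also have "\<dots> \<le> real (card ?S) - 1" by (rule subtour_bound) (simp add: list_segment_def)
  finally show False using card_list_segment[OF dL] j by simp
qed

lemma support_path_head_at_depot:
  assumes L: "support_path x L" and maximal: "\<And>w. w \<notin> set L \<Longrightarrow> x {Some w, Some (L ! 0)} < 1"
  shows "1 \<le> x {Some (L ! 0), None}" "length L = 1 \<Longrightarrow> x {Some (L ! 0), None} = 2"
proof -
  let ?u = "L ! 0"
  have L_ne: "L \<noteq> []" and dL: "distinct L" using L unfolding support_path_def by auto
  have nbr: "1 < length L \<and> w = L ! 1" if "w \<noteq> ?u" "1 \<le> x {Some ?u, Some w}" for w
  proof -
    have "w \<in> set L" using maximal[of w] that(2) by (auto simp: insert_commute)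
    then obtain j where j: "j < length L" "L ! j = w" by (auto simp: in_set_conv_nth)
    have "j \<noteq> 0" using j that(1) by (cases j) auto
    moreover have "\<not> 2 \<le> j" using support_path_no_chord[OF L _ j(1)] j that(2) by force
    ultimately have "j = 1" by arith
    then show ?thesis using j by simp
  qed
  have "x {Some ?u, None} = 2" if len: "length L = 1"
  proof (rule ccontr)
    assume "x {Some ?u, None} \<noteq> 2"
    then have "x {Some ?u, None} \<le> 1" using x_cases[of "{Some ?u, None}"] by auto
    with exists_other_incident_edge[of "{Some ?u, None}" ?u]
    obtain w where w: "w \<noteq> Some ?u" "{Some ?u, w} \<noteq> {Some ?u, None}" "1 \<le> x {Some ?u, w}"
      by auto
    then obtain w' where "w = Some w'" by (cases w) auto
    then show False using nbr[of w'] w len by auto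
  qed
  moreover have "1 \<le> x {Some ?u, None}" if len: "length L \<noteq> 1"
  proof -
    have l: "1 < length L" using len L_ne by (cases L) auto
    then have u1: "?u \<noteq> L ! 1" using nth_eq_iff_index_eq[OF dL, of 0 1] L_ne by simp
    obtain w where w: "w \<noteq> Some ?u" "{Some ?u, w} \<noteq> {Some ?u, Some (L ! 1)}" "1 \<le> x {Some ?u, w}"
      using exists_other_incident_edge[of "{Some ?u, Some (L ! 1)}" ?u] x_customer_edge_le_1[OF u1] u1
      by auto
    show ?thesis
    proof (cases w)
      case (Some w')
      then show ?thesis using nbr[of w'] w by auto
    qed (use w in simp)
  qed
  ultimately show "1 \<le> x {Some ?u, None}" "length L = 1 \<Longrightarrow> x {Some ?u, None} = 2"
    by fastforce+
qed

lemma support_path_closed_at_depot_in_routes_of: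
  assumes L: "support_path x L"
    and head: "1 \<le> x {Some (L ! 0), None}" and tail: "1 \<le> x {Some (L ! (length L - 1)), None}"
    and single: "length L = 1 \<Longrightarrow> x {Some (L ! 0), None} = 2"
  shows "L \<in> routes_of x"
proof -
  have dL: "distinct L" and L_ne: "L \<noteq> []" using L unfolding support_path_def by auto
  have route: "is_route L" unfolding is_route_def using dL L_ne by simp
  have "x e = route_vec L e" if e: "e \<in> edges" "e \<inter> Some ` set L \<noteq> {}" for e
  proof -
    obtain i where i: "i < length L" "Some (L ! i) \<in> e" using e(2) by (auto simp: in_set_conv_nth)
    then have "e \<in> delta_cust (L ! i)" using e(1) by (simp add: delta_cust_def)
    then obtain w where w: "w \<noteq> Some (L ! i)" "e = {Some (L ! i), w}" by (rule delta_custE)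
    let ?a = "route_vtx L i" and ?b = "route_vtx L (Suc (Suc i))"
    have "2 \<le> x {Some (L ! i), ?a}" if "?a = ?b"
    proof -
      have "i = 0 \<and> length L = 1"
        using that route_vtx_eq_iff[OF dL, of i "Suc (Suc i)"] i by auto
      then show ?thesis using single by simp
    qed
    then show ?thesis
      using x_incident_eq[OF support_path_route_neighbours[OF L head tail i(1)] _ w(1)]
        route_vec_incident[OF route i(1) w(1)] w(2) by simp
  qed
  then show ?thesis unfolding routes_of_def using route by simp
qed

lemma customer_on_route: "\<exists>R\<in>routes_of x. v \<in> set R"
proof -
  let ?P = "\<lambda>L. support_path x L \<and> v \<in> set L"
  have "?P [v]" unfolding support_path_def by simp
  moreover have "\<forall>L. ?P L \<longrightarrow> length L < Suc CARD('v)"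
    using support_path_length_le[of x] by (simp add: less_Suc_eq_le)
  ultimately obtain L where L: "?P L" and longest: "\<And>L'. ?P L' \<Longrightarrow> length L' \<le> length L"
    using ex_has_greatest_nat[of ?P "[v]" length] by metis
  have L_ne: "L \<noteq> []" using L unfolding support_path_def by simp
  have head: "x {Some w, Some (L' ! 0)} < 1"
    if L': "?P L'" "length L' = length L" and "w \<notin> set L'" for L' w
    using longest[of "w # L'"] support_path_Cons[of x L' w] that by force
  have path: "support_path x L" and rev_P: "?P (rev L)" using L support_path_rev by auto
  note head_L = support_path_head_at_depot[OF path head[OF L refl]]
  have "1 \<le> x {Some (rev L ! 0), None}"
    using support_path_head_at_depot(1)[OF support_path_rev[OF path] head[OF rev_P length_rev]] .
  moreover have "rev L ! 0 = L ! (length L - 1)" using L_ne by (simp add: rev_nth)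
  ultimately have "L \<in> routes_of x"
    using support_path_closed_at_depot_in_routes_of[OF path head_L(1) _ head_L(2)] by simp
  then show ?thesis using L by blast
qed

end

lemma rev_in_routes_of:
  assumes R: "R \<in> routes_of x"
  shows "rev R \<in> routes_of x"
proof -
  have route: "is_route R" by (rule routes_of_is_route[OF R])
  then have route': "is_route (rev R)" unfolding is_route_def by simp
  have "x e = route_vec (rev R) e" if e: "e \<in> edges" "e \<inter> Some ` set (rev R) \<noteq> {}" for e
  proof -
    obtain i where i: "i < length R" "Some (R ! i) \<in> e" using e(2) by (auto simp: in_set_conv_nth)
    then have "e \<in> delta_cust (R ! i)" using e(1) by (simp add: delta_cust_def)
    then obtain w where w: "w \<noteq> Some (R ! i)" "e = {Some (R ! i), w}" by (rule delta_custE)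
    let ?i' = "length R - 1 - i"
    have i': "?i' < length (rev R)" "rev R ! ?i' = R ! i" using i by (simp_all add: rev_nth)
    have "route_vtx (rev R) ?i' = route_vtx R (Suc (Suc i))"
      using route_vtx_rev[of ?i' R] i by (simp add: Suc_diff_Suc)
    moreover have "route_vtx (rev R) (Suc (Suc ?i')) = route_vtx R i"
      using route_vtx_rev[of "Suc (Suc ?i')" R] i by simp
    ultimately have "route_vec (rev R) e = route_vec R e"
      using route_vec_incident[OF route' i'(1)] route_vec_incident[OF route i(1) w(1)] w i'(2) by simp
    moreover have "x e = route_vec R e" using x_eq_route_vec[OF R e(1)] e(2) by simp
    ultimately show ?thesis by simp
  qed
  then show ?thesis unfolding routes_of_def using route' by simp
qed

text \<open>Two routes of \<open>x\<close> with the same first customer agree: by induction along \<open>R\<close>, the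
  successor of a common customer is determined by the edge weights of \<open>x\<close>.\<close>

lemma routes_of_same_head_prefix:
  assumes R: "R \<in> routes_of x" and R': "R' \<in> routes_of x" and head: "R' ! 0 = R ! 0"
  shows "length R \<le> length R'" "\<forall>k < length R. R' ! k = R ! k"
proof -
  have dR: "distinct R" and R_ne: "R \<noteq> []" and R'_ne: "R' \<noteq> []"
    using routes_of_is_route[OF R] routes_of_is_route[OF R'] unfolding is_route_def by auto
  have prefix: "\<forall>k'\<le>k. k' < length R' \<and> R' ! k' = R ! k'" if "k < length R" for k
    using that
  proof (induction k)
    case 0
    then show ?case using R'_ne head by simp
  next
    case (Suc k)
    then have IH: "\<forall>k'\<le>k. k' < length R' \<and> R' ! k' = R ! k'" by simp
    have k: "k < length R'" "R' ! k = R ! k" and k_R: "Suc k < length R" using IH Suc.prems by auto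
    have same_pred: "route_vtx R' k = route_vtx R k"
    proof (cases k)
      case (Suc k0)
      then have "R' ! k0 = R ! k0" "k0 < length R'" using IH by auto
      then show ?thesis using Suc k_R route_vtx_Suc[of k0 R] route_vtx_Suc[of k0 R'] by simp
    qed simp
    let ?b = "route_vtx R (Suc (Suc k))"
    have b: "?b = Some (R ! Suc k)" using route_vtx_Suc[of "Suc k" R] k_R by simp
    have b_ne: "?b \<noteq> Some (R ! k)" using b nth_eq_iff_index_eq[OF dR, of "Suc k" k] k_R by simp
    have pred_ne_b: "route_vtx R k \<noteq> ?b"
      using route_vtx_eq_iff[OF dR, of k "Suc (Suc k)"] k_R by simp
    have "x {Some (R ! k), ?b} = 1" using x_route_incident[OF R _ b_ne] k_R pred_ne_b by simp
    then have "?b = route_vtx R' k \<or> ?b = route_vtx R' (Suc (Suc k))"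
      using route_neighbour_if_x_nonzero[OF R' k(1)] b_ne k(2) by simp
    then have b': "?b = route_vtx R' (Suc (Suc k))" using same_pred pred_ne_b by simp
    have "Suc (Suc k) \<noteq> Suc (length R')"
      using b' b route_vtx_eq_None_iff[of "Suc (Suc k)" R'] k by auto
    then have k1: "Suc k < length R'" using k by simp
    then have "R' ! Suc k = R ! Suc k" using b' b route_vtx_Suc[of "Suc k" R'] by simp
    with k1 IH show ?case by (auto simp: le_Suc_eq)
  qed
  show "length R \<le> length R'" using prefix[of "length R - 1"] R_ne by (cases "length R") auto
  show "\<forall>k < length R. R' ! k = R ! k" using prefix by blast
qed

lemma routes_of_eq_if_same_head:
  assumes R: "R \<in> routes_of x" and R': "R' \<in> routes_of x" and head: "R' ! 0 = R ! 0"
  shows "R' = R"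
  using routes_of_same_head_prefix[OF R R' head] routes_of_same_head_prefix[OF R' R head[symmetric]]
  by (intro nth_equalityI) auto

lemma routes_of_head_in_set:
  assumes R: "R \<in> routes_of x" and R': "R' \<in> routes_of x"
  shows "j < length R' \<Longrightarrow> R' ! j \<in> set R \<Longrightarrow> R' ! 0 \<in> set R"
proof (induction j)
  case (Suc j)
  have dR': "distinct R'" using routes_of_is_route[OF R'] unfolding is_route_def by simp
  obtain i where i: "i < length R" "R ! i = R' ! Suc j"
    using Suc.prems(2) by (auto simp: in_set_conv_nth)
  let ?w = "Some (R' ! j)"
  have w_pred: "?w = route_vtx R' (Suc j)" using route_vtx_Suc[of j R'] Suc.prems by simp
  have w_ne: "?w \<noteq> Some (R' ! Suc j)"
    using nth_eq_iff_index_eq[OF dR', of j "Suc j"] Suc.prems by simp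
  have "x {Some (R' ! Suc j), ?w} \<noteq> 0" using x_route_incident[OF R' Suc.prems(1) w_ne] w_pred by simp
  then have "?w = route_vtx R i \<or> ?w = route_vtx R (Suc (Suc i))"
    using route_neighbour_if_x_nonzero[OF R i(1)] w_ne i(2) by simp
  then have "R' ! j \<in> set R"
    using route_vtx_Some_in_set[of R i] route_vtx_Some_in_set[of R "Suc (Suc i)"] i by auto
  then show ?case using Suc.IH Suc.prems by simp
qed simp

lemma routes_of_common_customer:
  assumes R: "R \<in> routes_of x" and R': "R' \<in> routes_of x" and v: "v \<in> set R" "v \<in> set R'"
  shows "R' = R \<or> R' = rev R"
proof -
  have R_ne: "R \<noteq> []" "R' \<noteq> []"
    using routes_of_is_route[OF R] routes_of_is_route[OF R'] unfolding is_route_def by auto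
  obtain j where "j < length R'" "R' ! j = v" using v(2) by (auto simp: in_set_conv_nth)
  then have "R' ! 0 \<in> set R" using routes_of_head_in_set[OF R R'] v(1) by simp
  then obtain i where i: "i < length R" "R ! i = R' ! 0" by (auto simp: in_set_conv_nth)
  have "x {Some (R' ! 0), None} \<noteq> 0" using x_route_incident[OF R', of 0 None] R_ne by simp
  then have "None = route_vtx R i \<or> None = route_vtx R (Suc (Suc i))"
    using route_neighbour_if_x_nonzero[OF R i(1), of None] i(2) by simp
  then have "i = 0 \<or> i = length R - 1"
    using route_vtx_eq_None_iff[of i R] route_vtx_eq_None_iff[of "Suc (Suc i)" R] i by auto
  then show ?thesis
  proof
    assume "i = 0"
    then show ?thesis using routes_of_eq_if_same_head[OF R R'] i(2) by simp
  next
    assume "i = length R - 1"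
    then have "rev R ! 0 = R' ! 0" using R_ne i(2) by (simp add: rev_nth)
    then show ?thesis using routes_of_eq_if_same_head[OF rev_in_routes_of[OF R] R'] by simp
  qed
qed

context integral_plan
begin

lemma route_partition_exists:
  obtains RR where "finite RR" "RR \<subseteq> routes_of x"
    "\<forall>R1\<in>RR. \<forall>R2\<in>RR. R1 \<noteq> R2 \<longrightarrow> set R1 \<inter> set R2 = {}" "\<forall>v. \<exists>R\<in>RR. v \<in> set R"
proof
  define rep where "rep t = (SOME R. R \<in> routes_of x \<and> set R = t)" for t
  let ?RR = "rep ` set ` routes_of x"
  have rep: "rep (set R) \<in> routes_of x \<and> set (rep (set R)) = set R" if "R \<in> routes_of x" for R
    unfolding rep_def by (rule someI[of _ R]) (use that in simp)
  show "finite ?RR" by (rule finite_imageI) (rule finite_subset[of _ UNIV]; simp)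
  show "?RR \<subseteq> routes_of x" using rep by auto
  show "\<forall>R1\<in>?RR. \<forall>R2\<in>?RR. R1 \<noteq> R2 \<longrightarrow> set R1 \<inter> set R2 = {}"
  proof (intro ballI impI)
    fix R1 R2 assume R12: "R1 \<in> ?RR" "R2 \<in> ?RR" "R1 \<noteq> R2"
    show "set R1 \<inter> set R2 = {}"
  proof (rule ccontr)
    assume "set R1 \<inter> set R2 \<noteq> {}"
    then obtain v where "v \<in> set R1" "v \<in> set R2" by auto
    moreover obtain S1 S2 where S: "S1 \<in> routes_of x" "R1 = rep (set S1)"
      "S2 \<in> routes_of x" "R2 = rep (set S2)" using R12(1,2) by auto
    ultimately have "R2 = R1 \<or> R2 = rev R1"
      using routes_of_common_customer[of R1 x R2 v] rep by simp
    then have "set S1 = set S2" using rep[OF S(1)] rep[OF S(3)] S(2,4) by auto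
    then show False using R12(3) S(2,4) by simp
  qed
  qed
  show "\<forall>v. \<exists>R\<in>?RR. v \<in> set R"
  proof
    fix v
    obtain R where R: "R \<in> routes_of x" "v \<in> set R" using customer_on_route by blast
    then show "\<exists>R\<in>?RR. v \<in> set R" using rep[OF R(1)] by (intro bexI[of _ "rep (set R)"]) auto
  qed
qed

lemma sum_route_vec_le:
  assumes "finite RR" "RR \<subseteq> routes_of x"
    and disjoint: "\<forall>R1\<in>RR. \<forall>R2\<in>RR. R1 \<noteq> R2 \<longrightarrow> set R1 \<inter> set R2 = {}"
    and e: "e \<in> edges"
  shows "(\<Sum>R\<in>RR. route_vec R e) \<le> x e"
proof (cases "\<exists>R\<in>RR. route_vec R e \<noteq> 0")
  case False
  then show ?thesis using x_nonneg[OF e] by simp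
next
  case True
  then obtain R0 where R0: "R0 \<in> RR" "route_vec R0 e \<noteq> 0" by blast
  obtain u w where "u \<noteq> w" "e = {u, w}" using e by (rule edgesE)
  then obtain v where v: "Some v \<in> e" by (cases u; cases w) auto
  have v_R0: "v \<in> set R0" using route_vec_nonzero_vertex[OF R0(2) v] by auto
  have "route_vec R e = 0" if R: "R \<in> RR - {R0}" for R
    using route_vec_nonzero_vertex[of R e, OF _ v] disjoint R R0(1) v_R0 by blast
  then have "(\<Sum>R\<in>RR. route_vec R e) = route_vec R0 e"
    using sum.remove[OF assms(1) R0(1), of "\<lambda>R. route_vec R e"] by simp
  also have "\<dots> = x e"
  proof -
    have "R0 \<in> routes_of x" using assms(2) R0(1) by blast
    moreover have "e \<inter> Some ` set R0 \<noteq> {}" using v v_R0 by blast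
    ultimately show ?thesis using x_eq_route_vec[OF _ e] by simp
  qed
  finally show ?thesis by simp
qed

text \<open>Double counting of edge ends at the customers of \<open>S\<close>: each edge of \<open>E(S)\<close> has two ends
  in \<open>S\<close>, each edge of \<open>\<delta>(S)\<close> one.\<close>

lemma cut_plus_twice_inner_le: "sum x (cut_edges S) + 2 * sum x (inner_edges S) \<le> 2 * real (card S)"
proof -
  let ?c = "\<lambda>e. card (e \<inter> Some ` S)"
  have ends: "card {v\<in>S. Some v \<in> e} = ?c e" for e
  proof -
    have "e \<inter> Some ` S = Some ` {v\<in>S. Some v \<in> e}" by auto
    then show ?thesis by (simp add: card_image)
  qed
  have "2 * real (card S) = (\<Sum>v\<in>S. \<Sum>e\<in>edges. if Some v \<in> e then x e else 0)"
    using degree_eq_2 finite_edges by (simp add: delta_cust_def sum.inter_filter)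
  also have "\<dots> = (\<Sum>e\<in>edges. \<Sum>v\<in>S. if Some v \<in> e then x e else 0)" by (rule sum.swap)
  also have "\<dots> = (\<Sum>e\<in>edges. x e * real (?c e))"
  proof (rule sum.cong[OF refl])
    fix e
    have "(\<Sum>v\<in>S. if Some v \<in> e then x e else 0) = (\<Sum>v\<in>{v\<in>S. Some v \<in> e}. x e)"
      by (rule sum.inter_filter[symmetric]) simp
    then show "(\<Sum>v\<in>S. if Some v \<in> e then x e else 0) = x e * real (?c e)"
      using ends[of e] by simp
  qed
  finally have total: "2 * real (card S) = (\<Sum>e\<in>edges. x e * real (?c e))" .
  have inner: "?c e = 2" if "e \<in> inner_edges S" for e
    using that unfolding inner_edges_def by (auto elim!: edgesE simp: Int_absorb2)
  have cut: "?c e = 1" if "e \<in> cut_edges S" for e using that unfolding cut_edges_def by simp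
  have disjoint: "cut_edges S \<inter> inner_edges S = {}" using inner cut by fastforce
  have subset: "cut_edges S \<union> inner_edges S \<subseteq> edges" unfolding cut_edges_def inner_edges_def by auto
  have "sum x (cut_edges S) + 2 * sum x (inner_edges S)
      = (\<Sum>e\<in>cut_edges S \<union> inner_edges S. x e * real (?c e))"
    using inner cut disjoint finite_cut_edges finite_inner_edges
    by (simp add: sum.union_disjoint sum_distrib_left mult.commute)
  also have "\<dots> \<le> (\<Sum>e\<in>edges. x e * real (?c e))"
    using x_nonneg by (intro sum_mono2[OF finite_edges subset]) auto
  finally show ?thesis using total by simp
qed

end

section \<open>Vehicle loads and the sets \<open>Y\<^sup>\<xi>(R)\<close>\<close>

text \<open>Summing the flow balance of a feasible load over the customers of \<open>S\<close> on \<open>R\<close>: the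
  unloaded amounts are bounded by \<open>C\<close> times \<open>z\<close>, and the loads on the arcs entering and
  leaving the positions of \<open>S\<close> telescope to at most \<open>C/2\<close> per crossing of \<open>\<delta>(S)\<close>.\<close>

lemma Yxi_demand_bound:
  fixes R :: "'v::finite list"
  assumes R: "is_route R" and z: "z \<in> Yxi C d xi R"
  shows "2 * (\<Sum>w\<in>S \<inter> set R. d xi w)
    \<le> 2 * C * (\<Sum>w\<in>S \<inter> set R. z $ w) + C * (\<Sum>e\<in>cut_edges S. route_vec R e)"
proof -
  have dR: "distinct R" using R unfolding is_route_def by simp
  obtain f :: "'v option \<times> 'v option \<Rightarrow> real" and g :: "'v \<Rightarrow> real" where
    f_nonneg: "\<forall>a. 0 \<le> f a" and
    balance: "\<forall>i\<in>{1..length R}. f (route_vtx R (i - 1), route_vtx R i) + d xi (R ! (i - 1))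
      = f (route_vtx R i, route_vtx R (i + 1)) + g (R ! (i - 1))" and
    f_le: "\<forall>i\<in>{1..length R + 1}. f (route_vtx R (i - 1), route_vtx R i) \<le> C" and
    g_le: "\<forall>i\<in>{1..length R}. g (R ! (i - 1)) \<le> C * z $ (R ! (i - 1))"
    using z unfolding Yxi_def by blast
  define F where "F k = f (route_vtx R k, route_vtx R (Suc k))" for k
  let ?I = "route_positions R S"
  have I: "finite ?I" "0 \<notin> ?I" "?I \<subseteq> {1..length R}" unfolding route_positions_def by auto
  have "d xi (R ! (i - 1)) = g (R ! (i - 1)) + (F i - F (i - 1))" if "i \<in> ?I" for i
  proof -
    have i: "i \<in> {1..length R}" "Suc (i - 1) = i" using that I(3) by auto
    then have "f (route_vtx R (i - 1), route_vtx R i) + d xi (R ! (i - 1))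
        = f (route_vtx R i, route_vtx R (i + 1)) + g (R ! (i - 1))" using balance by blast
    then show ?thesis unfolding F_def using i(2) by simp
  qed
  then have "(\<Sum>i\<in>?I. d xi (R ! (i - 1)))
      = (\<Sum>i\<in>?I. g (R ! (i - 1))) + ((\<Sum>i\<in>?I. F i) - (\<Sum>i\<in>?I. F (i - 1)))"
    by (simp add: sum.distrib sum_subtractf)
  moreover have "(\<Sum>i\<in>?I. g (R ! (i - 1))) \<le> C * (\<Sum>i\<in>?I. z $ (R ! (i - 1)))"
    unfolding sum_distrib_left by (rule sum_mono) (use g_le I(3) in blast)
  moreover have "2 * ((\<Sum>i\<in>?I. F i) - (\<Sum>i\<in>?I. F (i - 1))) \<le> C * (\<Sum>e\<in>cut_edges S. route_vec R e)"
  proof -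
    have "F i \<le> C" if "i \<in> ?I" for i
      using f_le[rule_format, of "Suc i"] that I(3) unfolding F_def by auto
    then show ?thesis
      using sum_minus_shifted_sum_le[OF I(1,2), of F C] f_nonneg card_boundary_route_positions[OF R]
      unfolding F_def by simp
  qed
  ultimately have "2 * (\<Sum>i\<in>?I. d xi (R ! (i - 1)))
      \<le> 2 * (C * (\<Sum>i\<in>?I. z $ (R ! (i - 1)))) + C * (\<Sum>e\<in>cut_edges S. route_vec R e)"
    by (smt (verit))
  then show ?thesis
    using sum_route_positions[OF dR, of "d xi" S] sum_route_positions[OF dR, of "\<lambda>w. z $ w" S]
    by (simp add: mult.assoc)
qed

text \<open>\<open>L k\<close> is the load on the arc leaving the \<open>k\<close>-th vertex of the route, the depot being
  vertex 0.\<close>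

lemma Yxi_from_loads:
  fixes R :: "'v::finite list" and L :: "nat \<Rightarrow> real"
  assumes R: "distinct R" and z: "\<forall>w. z $ w \<in> \<int> \<and> 0 \<le> z $ w"
    and L: "\<And>k. k \<le> length R \<Longrightarrow> 0 \<le> L k \<and> L k \<le> C"
    and unload: "\<And>k. k < length R \<Longrightarrow> L (Suc k) \<le> L k + d xi (R ! k)"
    and unload_le: "\<And>k. k < length R \<Longrightarrow> L k + d xi (R ! k) - L (Suc k) \<le> C * z $ (R ! k)"
  shows "z \<in> Yxi C d xi R"
proof -
  define f :: "'v option \<times> 'v option \<Rightarrow> real" where
    "f = (\<lambda>(u, w). case w of None \<Rightarrow> L (length R)
       | Some v \<Rightarrow> if v \<in> set R then L (index_in R v) else 0)"
  define g where "g v = (if v \<in> set R then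
      L (index_in R v) + d xi v - L (Suc (index_in R v)) else 0)" for v
  have f_nonneg: "\<forall>a. 0 \<le> f a"
    using L index_in_nth[OF R] unfolding f_def by (auto simp: in_set_conv_nth split: option.split)
  have f_at: "f (u, route_vtx R i) = L (i - 1)" if "1 \<le> i" "i \<le> Suc (length R)" for u i
    using that index_in_nth[OF R, of "i - 1"] route_vtx_cases[of i R] unfolding f_def by auto
  have g_at: "g (R ! k) = L k + d xi (R ! k) - L (Suc k)" if "k < length R" for k
    using that index_in_nth[OF R that] unfolding g_def by simp
  have g_nonneg: "\<forall>v. 0 \<le> g v"
    using unload index_in_nth[OF R] unfolding g_def by (auto simp: in_set_conv_nth)
  have "\<forall>i\<in>{1..length R}. f (route_vtx R (i - 1), route_vtx R i) + d xi (R ! (i - 1))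
      = f (route_vtx R i, route_vtx R (i + 1)) + g (R ! (i - 1))"
    using f_at g_at by auto
  moreover have "\<forall>i\<in>{1..length R + 1}. f (route_vtx R (i - 1), route_vtx R i) \<le> C"
    using f_at L by auto
  moreover have "\<forall>i\<in>{1..length R}. g (R ! (i - 1)) \<le> C * z $ (R ! (i - 1))"
  proof
    fix i assume "i \<in> {1..length R}"
    then have "i - 1 < length R" by auto
    then show "g (R ! (i - 1)) \<le> C * z $ (R ! (i - 1))" using g_at unload_le by simp
  qed
  ultimately show ?thesis unfolding Yxi_def using z f_nonneg g_nonneg by blast
qed

text \<open>Greedy unloading: the Lindley recursion carries the undelivered demand along the route;
  it stays within capacity as long as each segment of the route receives at least
  \<open>k\<^sub>\<xi>(segment) - 1\<close> visits.\<close>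

lemma Yxi_if_segment_bounds:
  assumes R: "distinct R" and C: "0 < C" and d: "\<forall>w. 0 \<le> d xi w"
    and z: "\<forall>w. z $ w \<in> \<int> \<and> 0 \<le> z $ w"
    and segments: "\<And>a c. a < c \<Longrightarrow> c \<le> length R \<Longrightarrow>
      real_of_int (kxi C d xi (list_segment R a c)) - 1 \<le> (\<Sum>w\<in>list_segment R a c. z $ w)"
  shows "z \<in> Yxi C d xi R"
proof -
  let ?t = "\<lambda>k. d xi (R ! k) - C * z $ (R ! k)"
  let ?L = "lindley ?t"
  have "?L i \<le> C" if i: "i \<le> length R" for i
  proof -
    obtain a where a: "a \<le> i" "?L i = (\<Sum>k = a..<i. ?t k)" using lindley_eq_suffix_sum by blast
    show ?thesis
    proof (cases "a = i")
      case False
      let ?S = "list_segment R a i"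
      have "sum (d xi) ?S / C \<le> real_of_int (kxi C d xi ?S)" unfolding kxi_def by simp
      with segments[of a i] a(1) False i have "sum (d xi) ?S / C - 1 \<le> (\<Sum>w\<in>?S. z $ w)" by simp
      then have "sum (d xi) ?S - C * (\<Sum>w\<in>?S. z $ w) \<le> C" using C by (simp add: field_simps)
      moreover have "?L i = sum (d xi) ?S - C * (\<Sum>w\<in>?S. z $ w)"
        unfolding a(2) sum_list_segment[OF R i] by (simp add: sum_subtractf sum_distrib_left)
      ultimately show ?thesis by simp
    qed (use a C in simp)
  qed
  moreover have "?L (Suc k) \<le> ?L k + d xi (R ! k)" for k
    using lindley_nonneg[of ?t k] d z C by (simp add: max_def)
  moreover have "?L k + d xi (R ! k) - ?L (Suc k) \<le> C * z $ (R ! k)" for k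
    by simp
  ultimately show ?thesis
    by (intro Yxi_from_loads[OF R z, of "lindley ?t"]) (auto simp: lindley_nonneg)
qed

section \<open>Validity of the inequalities for the integral recourse vectors\<close>

lemma kxi_le_if_sum_le:
  assumes "0 < C" "sum (d xi) S \<le> C * N" "N \<in> \<int>"
  shows "real_of_int (kxi C d xi S) \<le> N"
proof -
  obtain n where n: "N = of_int n" using assms(3) by (rule Ints_cases)
  have "sum (d xi) S / C \<le> N" using assms(1,2) by (simp add: divide_le_eq mult.commute)
  then show ?thesis unfolding kxi_def n by (simp add: ceiling_le_iff)
qed

context integral_plan
begin

lemma Pi_plan_integral:
  assumes "y \<in> Pi_plan C d x"
  shows "y $ xi $ v \<in> \<int>"
proof -
  obtain R where "R \<in> routes_of x" using customer_on_route by blast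
  then have "y $ xi \<in> Yxi C d xi R" using assms unfolding Pi_plan_def Pi_route_def by blast
  then show ?thesis unfolding Yxi_def by blast
qed

lemma Pi_plan_demand_bound:
  assumes C: "0 < C" and y: "y \<in> Pi_plan C d x"
  shows "sum (d xi) S \<le> C * ((\<Sum>w\<in>S. y $ xi $ w) + real (card S) - sum x (inner_edges S))"
proof -
  obtain RR where RR: "finite RR" "RR \<subseteq> routes_of x"
    and disjoint: "\<forall>R1\<in>RR. \<forall>R2\<in>RR. R1 \<noteq> R2 \<longrightarrow> set R1 \<inter> set R2 = {}"
    and cover: "\<forall>v. \<exists>R\<in>RR. v \<in> set R"
    by (rule route_partition_exists)
  have sum_parts: "(\<Sum>R\<in>RR. \<Sum>w\<in>S \<inter> set R. h w) = sum h S" for h :: "'v \<Rightarrow> real"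
  proof -
    have "S = (\<Union>R\<in>RR. S \<inter> set R)" using cover by blast
    moreover have "\<forall>R1\<in>RR. \<forall>R2\<in>RR. R1 \<noteq> R2 \<longrightarrow> (S \<inter> set R1) \<inter> (S \<inter> set R2) = {}"
      using disjoint by blast
    ultimately show ?thesis using sum.UNION_disjoint[OF RR(1), of "\<lambda>R. S \<inter> set R" h] by simp
  qed
  let ?cross = "\<lambda>R. \<Sum>e\<in>cut_edges S. route_vec R e"
  have "(\<Sum>R\<in>RR. 2 * (\<Sum>w\<in>S \<inter> set R. d xi w))
      \<le> (\<Sum>R\<in>RR. 2 * C * (\<Sum>w\<in>S \<inter> set R. y $ xi $ w) + C * ?cross R)"
  proof (rule sum_mono)
    fix R assume "R \<in> RR"
    then have R: "R \<in> routes_of x" using RR(2) by blast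
    then have "y $ xi \<in> Yxi C d xi R" using y unfolding Pi_plan_def Pi_route_def by blast
    then show "2 * (\<Sum>w\<in>S \<inter> set R. d xi w) \<le> 2 * C * (\<Sum>w\<in>S \<inter> set R. y $ xi $ w) + C * ?cross R"
      by (rule Yxi_demand_bound[OF routes_of_is_route[OF R]])
  qed
  then have "2 * sum (d xi) S \<le> 2 * C * (\<Sum>w\<in>S. y $ xi $ w) + C * (\<Sum>R\<in>RR. ?cross R)"
    by (simp add: sum.distrib sum_distrib_left[symmetric] sum_parts)
  moreover have "(\<Sum>R\<in>RR. ?cross R) \<le> sum x (cut_edges S)"
  proof -
    have "(\<Sum>R\<in>RR. ?cross R) = (\<Sum>e\<in>cut_edges S. \<Sum>R\<in>RR. route_vec R e)" by (rule sum.swap)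
    also have "\<dots> \<le> sum x (cut_edges S)"
      by (rule sum_mono) (use sum_route_vec_le[OF RR disjoint] in \<open>simp add: cut_edges_def\<close>)
    finally show ?thesis .
  qed
  then have "C * (\<Sum>R\<in>RR. ?cross R) \<le> C * (2 * real (card S) - 2 * sum x (inner_edges S))"
    using cut_plus_twice_inner_le[of S] C by (intro mult_left_mono) auto
  ultimately have "2 * sum (d xi) S
      \<le> 2 * C * (\<Sum>w\<in>S. y $ xi $ w) + C * (2 * real (card S) - 2 * sum x (inner_edges S))"
    by linarith
  then show ?thesis by (simp add: algebra_simps)
qed

lemma Pi_plan_box_subset_SRI:
  assumes C: "0 < C"
  shows "Pi_plan C d x \<inter> box0 b \<subseteq> SRI C d b x"
proof
  fix y assume y: "y \<in> Pi_plan C d x \<inter> box0 b"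
  have "real_of_int (kxi C d xi S) + sum x (inner_edges S) - real (card S) \<le> (\<Sum>v\<in>S. y $ xi $ v)"
    for S xi
  proof -
    have "(\<Sum>w\<in>S. y $ xi $ w) \<in> \<int>" using Pi_plan_integral y by (intro Ints_sum) blast
    moreover have "sum x (inner_edges S) \<in> \<int>"
      using x_integral unfolding inner_edges_def by (intro Ints_sum) auto
    ultimately have "(\<Sum>w\<in>S. y $ xi $ w) + real (card S) - sum x (inner_edges S) \<in> \<int>" by simp
    moreover have "sum (d xi) S \<le> C * ((\<Sum>w\<in>S. y $ xi $ w) + real (card S) - sum x (inner_edges S))"
      using Pi_plan_demand_bound[OF C] y by blast
    ultimately show ?thesis using kxi_le_if_sum_le[OF C] by force
  qed
  then show "y \<in> SRI C d b x" using y unfolding SRI_def by auto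
qed

end

section \<open>The segment relaxation and its vertices\<close>

lemma convex_box0: "convex (box0 b)"
  unfolding box0_def by (rule convexI) (auto intro!: convex_bound_le add_nonneg_nonneg)

lemma closed_box0: "closed (box0 b)"
  unfolding box0_def by (intro closed_Collect_all closed_Collect_conj closed_Collect_le continuous_intros)

lemma bounded_box0: "bounded (box0 b :: (real^'v::finite^'s::finite) set)"
proof -
  have "norm y \<le> (\<Sum>xi\<in>(UNIV :: 's set). \<Sum>w\<in>UNIV. \<bar>real_of_int (b w)\<bar>)" if y: "y \<in> box0 b" for y :: "real^'v^'s"
  proof -
    have entry_bound: "\<bar>y $ xi $ w\<bar> \<le> \<bar>real_of_int (b w)\<bar>" for xi w
    proof -
      have "0 \<le> y $ xi $ w" "y $ xi $ w \<le> real_of_int (b w)" using y unfolding box0_def by auto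
      then show ?thesis using abs_ge_self[of "real_of_int (b w)"] by linarith
    qed
    have "norm y \<le> (\<Sum>xi\<in>UNIV. norm (y $ xi))"
      unfolding norm_vec_def by (rule L2_set_le_sum) simp
    also have "\<dots> \<le> (\<Sum>xi\<in>UNIV. \<Sum>w\<in>UNIV. \<bar>y $ xi $ w\<bar>)"
      by (rule sum_mono) (rule norm_le_l1_cart)
    also have "\<dots> \<le> (\<Sum>xi\<in>(UNIV :: 's set). \<Sum>w\<in>UNIV. \<bar>real_of_int (b w)\<bar>)"
      by (intro sum_mono entry_bound)
    finally show ?thesis .
  qed
  then show ?thesis unfolding bounded_iff by blast
qed

lemma convex_Collect_imp_sum_ge: "convex {y :: real^'b^'a. P \<longrightarrow> c \<le> (\<Sum>w\<in>A. y $ i $ w)}"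
proof (cases P)
  case True
  have "linear (\<lambda>y::real^'b^'a. \<Sum>w\<in>A. y $ i $ w)"
    by (intro linear_compose_sum) (simp add: linearI)
  then show ?thesis
    using True convex_linear_vimage[OF _ convex_real_interval(1), of _ c] by (simp add: vimage_def)
qed simp

lemma convex_SRI: "convex (SRI C d b x)"
proof -
  have "SRI C d b x = box0 b \<inter> (\<Inter>S. \<Inter>xi. {y. S \<noteq> {} \<longrightarrow>
      real_of_int (kxi C d xi S) + sum x (inner_edges S) - real (card S) \<le> (\<Sum>w\<in>S. y $ xi $ w)})"
    unfolding SRI_def by auto
  then show ?thesis by (simp add: convex_Int convex_INT convex_box0 convex_Collect_imp_sum_ge)
qed

text \<open>The relaxation of \<open>SRI(x)\<close> to the segments of the routes of \<open>x\<close>. Along one route its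
  constraint matrix has the consecutive-ones property, which makes its vertices integral.\<close>

definition segment_polytope :: "real \<Rightarrow> ('s \<Rightarrow> 'v \<Rightarrow> real) \<Rightarrow> ('v \<Rightarrow> int)
    \<Rightarrow> ('v option set \<Rightarrow> real) \<Rightarrow> (real^'v^'s) set" where
  "segment_polytope C d b x = {y \<in> box0 b. \<forall>R xi a c. R \<in> routes_of x \<and> a < c \<and> c \<le> length R \<longrightarrow>
     real_of_int (kxi C d xi (list_segment R a c)) - 1 \<le> (\<Sum>w\<in>list_segment R a c. y $ xi $ w)}"

lemma segment_polytope_eq_Int:
  "segment_polytope C d b x = box0 b \<inter> (\<Inter>R. \<Inter>xi. \<Inter>a. \<Inter>c.
    {y. R \<in> routes_of x \<and> a < c \<and> c \<le> length R \<longrightarrow>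
      real_of_int (kxi C d xi (list_segment R a c)) - 1 \<le> (\<Sum>w\<in>list_segment R a c. y $ xi $ w)})"
  unfolding segment_polytope_def by auto

lemma compact_segment_polytope:
  "compact (segment_polytope C d b x :: (real^'v::finite^'s::finite) set)"
proof -
  have "closed (segment_polytope C d b x)"
    unfolding segment_polytope_eq_Int
    by (intro closed_Int closed_box0 closed_INT ballI closed_Collect_imp open_Collect_const
        closed_Collect_le continuous_intros)
  moreover have "bounded (segment_polytope C d b x)"
    using bounded_box0 unfolding segment_polytope_def by (rule bounded_subset) auto
  ultimately show ?thesis by (simp add: compact_eq_bounded_closed)
qed

lemma convex_segment_polytope: "convex (segment_polytope C d b x)"
  unfolding segment_polytope_eq_Int
  by (simp add: convex_Int convex_INT convex_box0 convex_Collect_imp_sum_ge)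

lemma routes_of_segment_of_common_route:
  assumes R: "R \<in> routes_of x" and R0: "R0 \<in> routes_of x" and common: "set R \<inter> set R0 \<noteq> {}"
    and ac: "a < c" "c \<le> length R"
  obtains a' c' where "a' < c'" "c' \<le> length R0" "list_segment R a c = list_segment R0 a' c'"
proof -
  obtain v where "v \<in> set R0" "v \<in> set R" using common by blast
  then have "R = R0 \<or> R = rev R0" using routes_of_common_customer[OF R0 R] by blast
  then show ?thesis
  proof
    assume "R = R0"
    then show ?thesis using that ac by blast
  next
    assume "R = rev R0"
    then show ?thesis
      using that[of "length R0 - c" "length R0 - a"] list_segment_rev[of a c R0] ac by simp
  qed
qed

context integral_plan
begin

lemma inner_edges_list_segment_ge:
  assumes R: "R \<in> routes_of x" and ac: "a < c" "c \<le> length R"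
  shows "real (c - a) - 1 \<le> sum x (inner_edges (list_segment R a c))"
proof -
  have dR: "distinct R" using routes_of_is_route[OF R] unfolding is_route_def by simp
  have c: "c - 1 < length R" "Suc (c - 1) = c" using ac by auto
  have "x e = 1" if e_path: "e \<in> path_edges R a (c - 1)" for e
  proof -
    obtain k where "k \<in> {a..<c - 1}" and e: "e = {Some (R ! k), Some (R ! Suc k)}"
      using e_path unfolding path_edges_def by auto
    then have k: "Suc k < length R" "e = {Some (R ! k), Some (R ! Suc k)}" using ac by auto
    have "Some (R ! Suc k) = route_vtx R (Suc (Suc k))" "Some (R ! Suc k) \<noteq> Some (R ! k)"
      "route_vtx R k \<noteq> route_vtx R (Suc (Suc k))"
      using k(1) route_vtx_Suc[of "Suc k" R] nth_eq_iff_index_eq[OF dR, of "Suc k" k]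
        route_vtx_eq_iff[OF dR, of k "Suc (Suc k)"] by auto
    then show ?thesis using x_route_incident[OF R, of k "Some (R ! Suc k)"] k by simp
  qed
  then have "real (card (path_edges R a (c - 1))) \<le> sum x (inner_edges (list_segment R a c))"
    using card_le_sum_inner_edges path_edges_subset_inner_edges[OF dR c(1)] c(2) by simp
  then show ?thesis using card_path_edges[OF dR c(1)] ac by simp
qed

lemma SRI_subset_segment_polytope: "SRI C d b x \<subseteq> segment_polytope C d b x"
proof
  fix y assume y: "y \<in> SRI C d b x"
  have "real_of_int (kxi C d xi (list_segment R a c)) - 1 \<le> (\<Sum>w\<in>list_segment R a c. y $ xi $ w)"
    if R: "R \<in> routes_of x" and ac: "a < c" "c \<le> length R" for R xi a c
  proof -
    have dR: "distinct R" using routes_of_is_route[OF R] unfolding is_route_def by simp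
    have "list_segment R a c \<noteq> {}" using ac unfolding list_segment_def by auto
    then have "real_of_int (kxi C d xi (list_segment R a c)) + sum x (inner_edges (list_segment R a c))
        - real (card (list_segment R a c)) \<le> (\<Sum>w\<in>list_segment R a c. y $ xi $ w)"
      using y unfolding SRI_def by auto
    then show ?thesis
      using card_list_segment[OF dR ac(2)] inner_edges_list_segment_ge[OF R ac] by simp
  qed
  then show "y \<in> segment_polytope C d b x" using y unfolding SRI_def segment_polytope_def by auto
qed

lemma integral_point_of_segment_polytope:
  assumes C: "0 < C" and d: "\<forall>xi w. 0 \<le> d xi w"
    and y: "y \<in> segment_polytope C d b x" and y_int: "\<forall>xi v. y $ xi $ v \<in> \<int>"
  shows "y \<in> Pi_plan C d x \<inter> box0 b"
proof -
  have "y $ xi \<in> Yxi C d xi R" if R: "R \<in> routes_of x" for R xi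
  proof (rule Yxi_if_segment_bounds)
    show "distinct R" using routes_of_is_route[OF R] unfolding is_route_def by simp
    show "\<forall>w. y $ xi $ w \<in> \<int> \<and> 0 \<le> y $ xi $ w"
      using y y_int unfolding segment_polytope_def box0_def by auto
    show "real_of_int (kxi C d xi (list_segment R a c)) - 1 \<le> (\<Sum>w\<in>list_segment R a c. y $ xi $ w)"
      if "a < c" "c \<le> length R" for a c
      using y R that unfolding segment_polytope_def by blast
  qed (use C d in auto)
  then show ?thesis using y unfolding Pi_plan_def Pi_route_def segment_polytope_def by auto
qed

end

lemma abs_mult_le_if_abs_le_1:
  fixes t u \<epsilon> :: real
  assumes "\<bar>t\<bar> \<le> \<epsilon>" "\<bar>u\<bar> \<le> 1"
  shows "\<bar>t * u\<bar> \<le> \<epsilon>"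
proof -
  have "\<bar>t\<bar> * \<bar>u\<bar> \<le> \<epsilon> * 1"
    using assms abs_ge_zero[of t] by (intro mult_mono) auto
  then show ?thesis by (simp add: abs_mult)
qed

lemma box0_perturbation:
  assumes y: "y \<in> box0 b" and t: "\<bar>t\<bar> \<le> \<epsilon>"
    and z: "\<And>xi w. z $ xi $ w \<noteq> 0 \<Longrightarrow>
      \<bar>z $ xi $ w\<bar> \<le> 1 \<and> \<epsilon> \<le> y $ xi $ w \<and> \<epsilon> \<le> real_of_int (b w) - y $ xi $ w"
  shows "y + t *\<^sub>R z \<in> box0 b"
proof -
  have "0 \<le> y $ xi $ w + t * z $ xi $ w \<and> y $ xi $ w + t * z $ xi $ w \<le> real_of_int (b w)" for xi w
  proof (cases "z $ xi $ w = 0")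
    case False
    then have "\<bar>t * z $ xi $ w\<bar> \<le> \<epsilon>" using abs_mult_le_if_abs_le_1[OF t] z by blast
    then show ?thesis using z[OF False] by (auto simp: abs_le_iff)
  qed (use y in \<open>simp add: box0_def\<close>)
  then show ?thesis unfolding box0_def by simp
qed

text \<open>The direction in which a fractional point is moved: it changes the prefix sums of
  scenario \<open>xi0\<close> along \<open>R\<close> by \<open>Z\<close>.\<close>

definition route_increments :: "'v list \<Rightarrow> 's \<Rightarrow> (nat \<Rightarrow> real) \<Rightarrow> real^'v^'s" where
  "route_increments R xi0 Z = (\<chi> xi w. if xi = xi0 \<and> w \<in> set R
     then Z (Suc (index_in R w)) - Z (index_in R w) else 0)"

lemma route_increments_nth:
  "distinct R \<Longrightarrow> k < length R \<Longrightarrow> route_increments R xi0 Z $ xi0 $ (R ! k) = Z (Suc k) - Z k"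
  unfolding route_increments_def by (simp add: index_in_nth)

lemma route_increments_eq_0: "xi \<noteq> xi0 \<or> w \<notin> set R \<Longrightarrow> route_increments R xi0 Z $ xi $ w = 0"
  unfolding route_increments_def by auto

lemma abs_route_increments_le:
  "\<forall>a c. \<bar>Z c - Z a\<bar> \<le> 1 \<Longrightarrow> \<bar>route_increments R xi0 Z $ xi $ w\<bar> \<le> 1"
  unfolding route_increments_def by simp

lemma sum_list_segment_route_increments:
  assumes R: "distinct R" and ac: "a \<le> c" "c \<le> length R"
  shows "(\<Sum>w\<in>list_segment R a c. route_increments R xi0 Z $ xi0 $ w) = Z c - Z a"
proof -
  have "(\<Sum>w\<in>list_segment R a c. route_increments R xi0 Z $ xi0 $ w) = (\<Sum>k = a..<c. Z (Suc k) - Z k)"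
    unfolding sum_list_segment[OF R ac(2)] using ac(2)
    by (intro sum.cong) (auto simp: route_increments_nth[OF R])
  also have "\<dots> = Z c - Z a" by (rule sum_Suc_diff'[OF ac(1)])
  finally show ?thesis .
qed

lemma route_increments_nonzero_imp_fractional:
  assumes R: "distinct R"
    and Z_const: "\<forall>a c. a \<le> c \<longrightarrow> c \<le> length R \<longrightarrow>
      (\<Sum>w\<in>list_segment R a c. y $ xi0 $ w) \<in> \<int> \<longrightarrow> Z c = Z a"
    and nonzero: "route_increments R xi0 Z $ xi $ w \<noteq> 0"
  shows "xi = xi0" "y $ xi0 $ w \<notin> \<int>"
proof -
  show xi: "xi = xi0" using nonzero route_increments_eq_0 by blast
  have "w \<in> set R" using nonzero route_increments_eq_0 by blast
  then obtain k where k: "k < length R" "w = R ! k" by (auto simp: in_set_conv_nth)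
  have "route_increments R xi0 Z $ xi0 $ (R ! k) = Z (Suc k) - Z k" by (rule route_increments_nth[OF R k(1)])
  then have "Z (Suc k) \<noteq> Z k" using nonzero xi k(2) by simp
  moreover have "(\<Sum>w\<in>list_segment R k (Suc k). y $ xi0 $ w) = y $ xi0 $ (R ! k)"
    using sum_list_segment[OF R, of "Suc k" "\<lambda>w. y $ xi0 $ w" k] k by simp
  ultimately show "y $ xi0 $ w \<notin> \<int>" using Z_const k by auto
qed

context integral_plan
begin

text \<open>A segment constraint is either tight, and then its segment sum is integral, so that \<open>Z\<close>
  does not change it; or it has slack at least \<open>\<epsilon>\<close>.\<close>

lemma segment_constraint_perturbation:
  assumes y: "y \<in> segment_polytope C d b x" and R0: "R0 \<in> routes_of x"
    and Z_const: "\<forall>a c. a \<le> c \<longrightarrow> c \<le> length R0 \<longrightarrow>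
      (\<Sum>w\<in>list_segment R0 a c. y $ xi0 $ w) \<in> \<int> \<longrightarrow> Z c = Z a"
    and Z_bound: "\<forall>a c. \<bar>Z c - Z a\<bar> \<le> 1" and t: "\<bar>t\<bar> \<le> \<epsilon>"
    and slack: "\<forall>a c. a < c \<longrightarrow> c \<le> length R0 \<longrightarrow>
      real_of_int (kxi C d xi0 (list_segment R0 a c)) - 1 < (\<Sum>w\<in>list_segment R0 a c. y $ xi0 $ w) \<longrightarrow>
      \<epsilon> \<le> (\<Sum>w\<in>list_segment R0 a c. y $ xi0 $ w) - (real_of_int (kxi C d xi0 (list_segment R0 a c)) - 1)"
    and R: "R \<in> routes_of x" and ac: "a < c" "c \<le> length R"
  shows "real_of_int (kxi C d xi (list_segment R a c)) - 1
    \<le> (\<Sum>w\<in>list_segment R a c. (y + t *\<^sub>R route_increments R0 xi0 Z) $ xi $ w)"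
proof -
  let ?z = "route_increments R0 xi0 Z" and ?S = "list_segment R a c"
  let ?k = "real_of_int (kxi C d xi ?S) - 1"
  have dR0: "distinct R0" using routes_of_is_route[OF R0] unfolding is_route_def by simp
  have y_S: "?k \<le> (\<Sum>w\<in>?S. y $ xi $ w)" using y R ac unfolding segment_polytope_def by blast
  have split: "(\<Sum>w\<in>?S. (y + t *\<^sub>R ?z) $ xi $ w) = (\<Sum>w\<in>?S. y $ xi $ w) + t * (\<Sum>w\<in>?S. ?z $ xi $ w)"
    by (simp add: sum.distrib sum_distrib_left)
  show ?thesis
  proof (cases "xi = xi0 \<and> set R \<inter> set R0 \<noteq> {}")
    case False
    then have "\<forall>w\<in>?S. ?z $ xi $ w = 0"
      using list_segment_subset_set[OF ac(2)] route_increments_eq_0 by blast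
    then show ?thesis using split y_S by simp
  next
    case True
    then have xi: "xi = xi0" by simp
    obtain a' c' where a'c': "a' < c'" "c' \<le> length R0" "?S = list_segment R0 a' c'"
      using routes_of_segment_of_common_route[OF R R0 _ ac] True by blast
    have z_S: "(\<Sum>w\<in>?S. ?z $ xi $ w) = Z c' - Z a'"
      using xi a'c' sum_list_segment_route_increments[OF dR0, of a' c' xi0 Z] by simp
    show ?thesis
    proof (cases "?k < (\<Sum>w\<in>?S. y $ xi $ w)")
      case True
      then have "\<epsilon> \<le> (\<Sum>w\<in>?S. y $ xi $ w) - ?k" using slack a'c' xi by simp
      moreover have "\<bar>t * (Z c' - Z a')\<bar> \<le> \<epsilon>" using abs_mult_le_if_abs_le_1 t Z_bound by blast
      ultimately show ?thesis using split z_S by (simp add: abs_le_iff)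
    next
      case False
      then have "(\<Sum>w\<in>list_segment R0 a' c'. y $ xi0 $ w)
          = real_of_int (kxi C d xi0 (list_segment R0 a' c') - 1)"
        using y_S a'c'(3) xi by simp
      then have "(\<Sum>w\<in>list_segment R0 a' c'. y $ xi0 $ w) \<in> \<int>" by (metis Ints_of_int)
      then have "Z c' = Z a'" using Z_const a'c' by simp
      then show ?thesis using split z_S y_S by simp
    qed
  qed
qed

lemma segment_polytope_perturbation:
  assumes y: "y \<in> segment_polytope C d b x" and R0: "R0 \<in> routes_of x"
    and Z_const: "\<forall>a c. a \<le> c \<longrightarrow> c \<le> length R0 \<longrightarrow>
      (\<Sum>w\<in>list_segment R0 a c. y $ xi0 $ w) \<in> \<int> \<longrightarrow> Z c = Z a"
    and Z_bound: "\<forall>a c. \<bar>Z c - Z a\<bar> \<le> 1"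
  obtains \<epsilon> where "0 < \<epsilon>"
    "\<forall>t. \<bar>t\<bar> \<le> \<epsilon> \<longrightarrow> y + t *\<^sub>R route_increments R0 xi0 Z \<in> segment_polytope C d b x"
proof -
  let ?z = "route_increments R0 xi0 Z"
  have dR0: "distinct R0" using routes_of_is_route[OF R0] unfolding is_route_def by simp
  define slack where "slack = (\<lambda>(a, c). (\<Sum>w\<in>list_segment R0 a c. y $ xi0 $ w)
      - (real_of_int (kxi C d xi0 (list_segment R0 a c)) - 1))"
  let ?A = "slack ` ({..length R0} \<times> {..length R0})
    \<union> range (\<lambda>w. y $ xi0 $ w) \<union> range (\<lambda>w. real_of_int (b w) - y $ xi0 $ w)"
  obtain \<epsilon> where \<epsilon>: "0 < \<epsilon>" and \<epsilon>_le: "\<forall>s\<in>?A. 0 < s \<longrightarrow> \<epsilon> \<le> s"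
    using finite_pos_lower_bound[of ?A] by auto
  have y_box: "y \<in> box0 b" using y unfolding segment_polytope_def by simp
  have fractional: "\<bar>?z $ xi $ w\<bar> \<le> 1 \<and> \<epsilon> \<le> y $ xi $ w \<and> \<epsilon> \<le> real_of_int (b w) - y $ xi $ w"
    if "?z $ xi $ w \<noteq> 0" for xi w
  proof -
    note xi = route_increments_nonzero_imp_fractional(1)[OF dR0 Z_const that]
    have "y $ xi0 $ w \<noteq> 0" "y $ xi0 $ w \<noteq> real_of_int (b w)"
      using route_increments_nonzero_imp_fractional(2)[OF dR0 Z_const that] by auto
    moreover have "0 \<le> y $ xi0 $ w" "y $ xi0 $ w \<le> real_of_int (b w)"
      using y_box unfolding box0_def by auto
    ultimately have "0 < y $ xi0 $ w" "0 < real_of_int (b w) - y $ xi0 $ w" by linarith+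
    then show ?thesis using \<epsilon>_le xi abs_route_increments_le[OF Z_bound] by auto
  qed
  have slack_le: "\<forall>a c. a < c \<longrightarrow> c \<le> length R0 \<longrightarrow>
      real_of_int (kxi C d xi0 (list_segment R0 a c)) - 1 < (\<Sum>w\<in>list_segment R0 a c. y $ xi0 $ w) \<longrightarrow>
      \<epsilon> \<le> (\<Sum>w\<in>list_segment R0 a c. y $ xi0 $ w) - (real_of_int (kxi C d xi0 (list_segment R0 a c)) - 1)"
  proof (intro allI impI)
    fix a c assume "a < c" "c \<le> length R0" and tight: "real_of_int (kxi C d xi0 (list_segment R0 a c)) - 1
      < (\<Sum>w\<in>list_segment R0 a c. y $ xi0 $ w)"
    then have "slack (a, c) \<in> ?A" by auto
    moreover have "0 < slack (a, c)" using tight unfolding slack_def by simp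
    ultimately show "\<epsilon> \<le> (\<Sum>w\<in>list_segment R0 a c. y $ xi0 $ w)
        - (real_of_int (kxi C d xi0 (list_segment R0 a c)) - 1)"
      using \<epsilon>_le unfolding slack_def by simp
  qed
  show thesis
  proof (rule that[OF \<epsilon>], intro allI impI)
    fix t assume t: "\<bar>t\<bar> \<le> \<epsilon>"
    have "y + t *\<^sub>R ?z \<in> box0 b" by (rule box0_perturbation[OF y_box t fractional])
    moreover note segment_constraint_perturbation[OF y R0 Z_const Z_bound t slack_le]
    ultimately show "y + t *\<^sub>R ?z \<in> segment_polytope C d b x"
      unfolding segment_polytope_def by blast
  qed
qed

text \<open>If \<open>y\<close> were fractional at the \<open>m\<close>-th customer of a route \<open>R0\<close>, the prefix sums of \<open>y\<close>
  along \<open>R0\<close> before and after it would lie in different cosets of \<open>\<int>\<close>; moving \<open>y\<close> by the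
  increments of the indicator of one coset keeps every tight segment constraint tight.\<close>

lemma extreme_point_of_segment_polytope_integral:
  assumes extreme: "y extreme_point_of segment_polytope C d b x"
  shows "y $ xi0 $ v0 \<in> \<int>"
proof (rule ccontr)
  assume fractional: "y $ xi0 $ v0 \<notin> \<int>"
  have y: "y \<in> segment_polytope C d b x" using extreme unfolding extreme_point_of_def by blast
  obtain R0 where R0: "R0 \<in> routes_of x" "v0 \<in> set R0" using customer_on_route by blast
  have dR0: "distinct R0" using routes_of_is_route[OF R0(1)] unfolding is_route_def by simp
  obtain m where m: "m < length R0" "R0 ! m = v0" using R0(2) by (auto simp: in_set_conv_nth)
  define P where "P i = (\<Sum>k = 0..<i. y $ xi0 $ (R0 ! k))" for i
  define Z where "Z i = frac_indicator (frac (P (Suc m))) (P i)" for i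
  have "\<forall>a c. a \<le> c \<longrightarrow> c \<le> length R0 \<longrightarrow> (\<Sum>w\<in>list_segment R0 a c. y $ xi0 $ w) \<in> \<int> \<longrightarrow> Z c = Z a"
  proof (intro allI impI)
    fix a c assume ac: "a \<le> c" "c \<le> length R0" and "(\<Sum>w\<in>list_segment R0 a c. y $ xi0 $ w) \<in> \<int>"
    moreover have "P c - P a = (\<Sum>w\<in>list_segment R0 a c. y $ xi0 $ w)"
      unfolding P_def sum_list_segment[OF dR0 ac(2)]
      using sum.atLeastLessThan_concat[of 0 a c "\<lambda>k. y $ xi0 $ (R0 ! k)"] ac by simp
    ultimately show "Z c = Z a" unfolding Z_def by (simp add: frac_indicator_eq_if_diff_Ints)
  qed
  moreover have "\<forall>a c. \<bar>Z c - Z a\<bar> \<le> 1" unfolding Z_def by (simp add: abs_frac_indicator_diff_le)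
  ultimately obtain \<epsilon> where \<epsilon>: "0 < \<epsilon>"
    and moves: "\<forall>t. \<bar>t\<bar> \<le> \<epsilon> \<longrightarrow> y + t *\<^sub>R route_increments R0 xi0 Z \<in> segment_polytope C d b x"
    by (rule segment_polytope_perturbation[OF y R0(1)])
  have "P (Suc m) - P m \<notin> \<int>" using fractional m unfolding P_def by simp
  then have "Z (Suc m) \<noteq> Z m" unfolding Z_def by (rule frac_indicator_separates)
  then have "route_increments R0 xi0 Z $ xi0 $ v0 \<noteq> 0"
    using route_increments_nth[OF dR0 m(1), of xi0 Z] m(2) by simp
  then have "\<epsilon> *\<^sub>R route_increments R0 xi0 Z \<noteq> 0" using \<epsilon> by auto
  moreover have "y + (- \<epsilon>) *\<^sub>R route_increments R0 xi0 Z \<in> segment_polytope C d b x"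
    "y + \<epsilon> *\<^sub>R route_increments R0 xi0 Z \<in> segment_polytope C d b x"
    using moves[rule_format, of "- \<epsilon>"] moves[rule_format, of \<epsilon>] \<epsilon> by auto
  ultimately show False using not_extreme_point_if_two_sided[of y] extreme by simp
qed

end

theorem theorem3:
  fixes C :: real and p :: "'s::finite \<Rightarrow> real" and d :: "'s \<Rightarrow> 'v::finite \<Rightarrow> real"
    and b :: "'v \<Rightarrow> int" and X :: "('v option set \<Rightarrow> real) set"
    and xbar :: "'v option set \<Rightarrow> real"
  assumes C_pos: "C \<in> \<rat>" "0 < C"
    and d_rat: "\<forall>xi v. d xi v \<in> \<rat> \<and> 0 \<le> d xi v \<and> d xi v \<le> C"
    and p_prob: "\<forall>xi. 0 \<le> p xi" "(\<Sum>xi\<in>UNIV. p xi) = 1"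
    and X_choice: "X = X_sub \<or> (\<exists>k::nat. 0 < k \<and> X = X_cvrp C p d k)"
    and b_nonneg: "\<forall>v. 0 \<le> b v"
    and x_in: "xbar \<in> X" and x_int: "\<forall>e\<in>edges. xbar e \<in> \<int>"
  shows "SRI C d b xbar = convex hull (Pi_plan C d xbar \<inter> box0 b)"
proof -
  have "xbar \<in> X_sub" using X_choice x_in unfolding X_cvrp_def by auto
  then interpret integral_plan xbar using x_int by unfold_locales
  let ?T = "segment_polytope C d b xbar" and ?Pi = "Pi_plan C d xbar \<inter> box0 b"
  have "{y. y extreme_point_of ?T} \<subseteq> ?Pi"
  proof
    fix y assume "y \<in> {y. y extreme_point_of ?T}"
    then have "y extreme_point_of ?T" by simp
    then have "y \<in> ?T" "\<forall>xi v. y $ xi $ v \<in> \<int>"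
      using extreme_point_of_segment_polytope_integral unfolding extreme_point_of_def by blast+
    then show "y \<in> ?Pi" using integral_point_of_segment_polytope C_pos(2) d_rat by blast
  qed
  then have "?T \<subseteq> convex hull ?Pi"
    using Krein_Milman_Minkowski[OF compact_segment_polytope convex_segment_polytope] hull_mono
    by metis
  moreover have "convex hull ?Pi \<subseteq> SRI C d b xbar"
    using Pi_plan_box_subset_SRI[OF C_pos(2)] convex_SRI by (rule hull_minimal)
  ultimately show ?thesis using SRI_subset_segment_polytope by blast
qed

end
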